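(* Let $N\ge 6$ be even but not a multiple of $4$, and $0\le r_1<\dots<r_N\le 1$. Let $\pi$ be the 2-factor consisting of the six-cycle $(r_1,r_{N/2},r_N,r_{N/2+1},r_2,r_{N/2+2})$ together with the $(N-6)/4$ four-cycles $(r_a,r_{a+N/2},r_{a+1},r_{a+N/2+1})$ for $a=3,5,\dots,\frac N2-2$. For $k=0,1,\dots,N-1$ let $h_k^*$ be the 2-factor obtained from $\pi$ by replacing every vertex $r_i$ by $r_{i+k}$ (index taken mod $N$ in $\{1,\dots,N\}$). Then the 2-factors $h_k^*$, $k=0,\dots,N-1$, are exactly the 2-factors of $\mathcal K_N$ having the maximum number of crossing pairs of edges.
   Context: A 2-factor of $\mathcal K_N$ is a spanning subgraph in which each vertex has degree $2$, i.e. a covering of all vertices by vertex-disjoint cycles of length at least $3$; a cycle written $(v_1,\dots,v_m)$ has edges $\{v_i,v_{i+1}\}$ and $\{v_m,v_1\}$. Two edges $\{r_i,r_j\}$, $\{r_k,r_\ell\}$ with $i<j$, $k<\ell$ cross if $i<k<j<\ell$ or $k<i<\ell<j$; the number of crossings of a 2-factor is the number of unordered pairs of its edges that cross. *)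

theory Defs
  imports Main
begin

text \<open>Vertices r_1 < ... < r_N are represented by their indices 1..N; crossings
depend only on the indices. An edge is a 2-element set of indices.\<close>

definition two_factor :: "nat \<Rightarrow> nat set set \<Rightarrow> bool" where
  "two_factor N F \<longleftrightarrow>
     F \<subseteq> {{i, j} | i j. i \<in> {1..N} \<and> j \<in> {1..N} \<and> i \<noteq> j} \<and>
     (\<forall>v\<in>{1..N}. card {e\<in>F. v \<in> e} = 2)"

definition crosses :: "nat set \<Rightarrow> nat set \<Rightarrow> bool" where
  "crosses e f \<longleftrightarrow> (\<exists>i j k l. e = {i, j} \<and> f = {k, l} \<and> i < j \<and> k < l \<and>
      ((i < k \<and> k < j \<and> j < l) \<or> (k < i \<and> i < l \<and> l < j)))"

definition crossings :: "nat set set \<Rightarrow> nat" where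
  "crossings F = card {{e, f} | e f. e \<in> F \<and> f \<in> F \<and> crosses e f}"

definition cycle_edges :: "nat list \<Rightarrow> nat set set" where
  "cycle_edges vs = {{vs ! i, vs ! ((i + 1) mod length vs)} | i. i < length vs}"

definition pi_factor :: "nat \<Rightarrow> nat set set" where
  "pi_factor N =
     cycle_edges [1, N div 2, N, N div 2 + 1, 2, N div 2 + 2] \<union>
     (\<Union>a\<in>{a. odd a \<and> 3 \<le> a \<and> a + 2 \<le> N div 2}.
        cycle_edges [a, a + N div 2, a + 1, a + N div 2 + 1])"

definition shift_idx :: "nat \<Rightarrow> nat \<Rightarrow> nat \<Rightarrow> nat" where
  "shift_idx N k i = (i - 1 + k) mod N + 1"

definition h_star :: "nat \<Rightarrow> nat \<Rightarrow> nat set set" where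
  "h_star N k = (\<lambda>e. shift_idx N k ` e) ` pi_factor N"

end

theory Submission
  imports Defs
begin

text \<open>
  Write \<open>N = 2 m\<close> with \<open>m\<close> odd. An edge crossing \<open>{i, j}\<close> has one end strictly inside and one
  strictly outside \<open>(i, j)\<close>, so counting degrees on the shorter side bounds the number of edges
  crossing \<open>{i, j}\<close> by \<open>N - 3\<close> for a diameter (\<open>j - i = m\<close>), by \<open>N - 4\<close> for a near-diameter
  (\<open>j - i = m \<plusminus> 1\<close>) and by \<open>N - 6\<close> otherwise. Summing over the \<open>N\<close> edges, twice the number of
  crossings is at most \<open>N (N - 4)\<close> plus the number of diameters, hence at most \<open>N (N - 4) + m - 1\<close>
  by parity. In the case of equality there are no short edges, exactly one diameter \<open>{u, u + m}\<close>
  is missing and every edge is tight. Tightness of a diameter forces the other edges at its two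
  ends to lie on opposite sides of it; propagating this around the circle from \<open>u\<close> determines
  the whole 2-factor, which turns out to be the rotation of \<open>\<pi>\<close> taking \<open>r\<^sub>1\<close> to \<open>r\<^sub>u\<close>.
  Conversely, each rotation of \<open>\<pi>\<close> has this shape and attains the bound.
\<close>

section \<open>Crossings of a single edge\<close>

lemma sum_card_incident:
  assumes "finite S" "finite F"
  shows "(\<Sum>v\<in>S. card {f\<in>F. v \<in> f}) = (\<Sum>f\<in>F. card (f \<inter> S))"
proof -
  have "(\<Sum>v\<in>S. card {f\<in>F. v \<in> f}) = (\<Sum>v\<in>S. \<Sum>f\<in>F. if v \<in> f then 1 else 0)"
    using assms by (simp add: sum.inter_filter[symmetric])
  also have "\<dots> = (\<Sum>f\<in>F. \<Sum>v\<in>S. if v \<in> f then 1 else 0)" by (rule sum.swap)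
  also have "\<dots> = (\<Sum>f\<in>F. card (f \<inter> S))"
  proof (rule sum.cong[OF refl])
    fix f
    have "f \<inter> S = {v\<in>S. v \<in> f}" by auto
    then show "(\<Sum>v\<in>S. if v \<in> f then 1 else 0) = card (f \<inter> S)"
      using assms by (simp add: sum.inter_filter[symmetric])
  qed
  finally show ?thesis .
qed

lemma card_meeting_le_sum_card_Int:
  assumes "finite A" "finite S"
  shows "card {f\<in>A. f \<inter> S \<noteq> {}} \<le> (\<Sum>f\<in>A. card (f \<inter> S))"
proof -
  have "card {f\<in>A. f \<inter> S \<noteq> {}} = (\<Sum>f\<in>A. if f \<inter> S \<noteq> {} then 1 else 0)"
    using assms(1) by (simp add: sum.inter_filter[symmetric])
  also have "\<dots> \<le> (\<Sum>f\<in>A. card (f \<inter> S))"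
    using assms(2) by (intro sum_mono) (auto simp: card_gt_0_iff Suc_le_eq)
  finally show ?thesis .
qed

lemma sum_card_Int_eq_single:
  assumes "finite A" "g \<in> A" "\<And>f. f \<in> A \<Longrightarrow> f \<inter> S \<noteq> {} \<Longrightarrow> f = g"
  shows "(\<Sum>f\<in>A. card (f \<inter> S)) = card (g \<inter> S)"
proof -
  have "(\<Sum>f\<in>A. card (f \<inter> S)) = card (g \<inter> S) + (\<Sum>f\<in>A - {g}. card (f \<inter> S))"
    using assms(1,2) by (rule sum.remove)
  moreover have "(\<Sum>f\<in>A - {g}. card (f \<inter> S)) = 0"
  proof (rule sum.neutral, rule ballI)
    fix f assume "f \<in> A - {g}"
    then have "f \<inter> S = {}" using assms(3) by blast
    then show "card (f \<inter> S) = 0" by simp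
  qed
  ultimately show ?thesis by simp
qed

lemma card_filter_three:
  assumes "a \<noteq> b" "a \<noteq> c" "b \<noteq> c"
  shows "card {x\<in>{a, b, c}. P x} = of_bool (P a) + of_bool (P b) + of_bool (P c)"
proof -
  have "card {x\<in>{a, b, c}. P x} = (\<Sum>x\<in>{a, b, c}. of_bool (P x))"
    by (simp add: Int_def conj_commute)
  also have "\<dots> = of_bool (P a) + of_bool (P b) + of_bool (P c)"
    using assms by (simp del: sum_of_bool_eq)
  finally show ?thesis .
qed

lemma sum_card_symmetric_eq_twice_card_pairs:
  assumes fin: "finite F" and sym: "\<And>e f. R e f \<Longrightarrow> R f e" and irr: "\<And>e. \<not> R e e"
  shows "(\<Sum>e\<in>F. card {f\<in>F. R e f}) = 2 * card {{e, f} | e f. e \<in> F \<and> f \<in> F \<and> R e f}"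
proof -
  let ?P = "{{e, f} | e f. e \<in> F \<and> f \<in> F \<and> R e f}"
  let ?Q = "Sigma F (\<lambda>e. {f\<in>F. R e f})"
  let ?A = "\<lambda>p. {q\<in>?Q. p = {fst q, snd q}}"
  have "(\<Sum>e\<in>F. card {f\<in>F. R e f}) = card ?Q" using fin by (simp add: card_SigmaI)
  also have "?Q = (\<Union>p\<in>?P. ?A p)" by (auto; blast)
  also have "card (\<Union>p\<in>?P. ?A p) = (\<Sum>p\<in>?P. card (?A p))"
  proof (rule card_UN_disjoint)
    have "?P \<subseteq> (\<lambda>(e,f). {e,f}) ` (F \<times> F)" by auto
    moreover have "finite ((\<lambda>(e,f). {e,f}) ` (F \<times> F))" using fin by simp
    ultimately show "finite ?P" by (rule finite_subset)
    have "\<And>p. ?A p \<subseteq> F \<times> F" by auto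
    then show "\<forall>p\<in>?P. finite (?A p)" using fin by (meson finite_SigmaI finite_subset)
    show "\<forall>p\<in>?P. \<forall>p'\<in>?P. p \<noteq> p' \<longrightarrow> ?A p \<inter> ?A p' = {}" by blast
  qed
  also have "\<dots> = (\<Sum>p\<in>?P. 2)"
  proof (rule sum.cong[OF refl])
    fix p assume "p \<in> ?P"
    then obtain e f where ef: "p = {e,f}" "e \<in> F" "f \<in> F" "R e f" by blast
    have "e \<noteq> f" using ef irr by auto
    have "?A p = {(e,f),(f,e)}" using ef sym by (auto simp: doubleton_eq_iff)
    then show "card (?A p) = 2" using \<open>e \<noteq> f\<close> by simp
  qed
  finally show ?thesis by simp
qed

lemma crosses_sym: "crosses e f \<longleftrightarrow> crosses f e"
  unfolding crosses_def by blast

lemma crosses_irrefl: "\<not> crosses e e"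
  unfolding crosses_def by (auto simp: doubleton_eq_iff)

lemma crosses_iff:
  assumes "i < j"
  shows "crosses {i,j} {a,b} \<longleftrightarrow> (i<a \<and> a<j \<and> (b<i \<or> j<b)) \<or> (i<b \<and> b<j \<and> (a<i \<or> j<a))"
proof
  assume "crosses {i,j} {a,b}"
  then obtain i' j' k l where h: "{i,j} = {i',j'}" "{a,b} = {k,l}" "i'<j'" "k<l"
    "(i' < k \<and> k < j' \<and> j' < l) \<or> (k < i' \<and> i' < l \<and> l < j')"
    unfolding crosses_def by blast
  have "i' = i \<and> j' = j" using h(1,3) assms by (auto simp: doubleton_eq_iff)
  then show "(i<a \<and> a<j \<and> (b<i \<or> j<b)) \<or> (i<b \<and> b<j \<and> (a<i \<or> j<a))"
    using h(2,4,5) by (auto simp: doubleton_eq_iff)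
next
  assume h: "(i<a \<and> a<j \<and> (b<i \<or> j<b)) \<or> (i<b \<and> b<j \<and> (a<i \<or> j<a))"
  then consider "a < b" | "b < a" by linarith
  then show "crosses {i,j} {a,b}"
  proof cases
    case 1
    then show ?thesis using h assms unfolding crosses_def
      by (intro exI[of _ i] exI[of _ j] exI[of _ a] exI[of _ b]) auto
  next
    case 2
    then show ?thesis using h assms unfolding crosses_def
      by (intro exI[of _ i] exI[of _ j] exI[of _ b] exI[of _ a]) (auto simp: insert_commute)
  qed
qed

lemma twice_crossings_eq_sum:
  "finite F \<Longrightarrow> 2 * crossings F = (\<Sum>e\<in>F. card {f\<in>F. crosses e f})"
  unfolding crossings_def
  using sum_card_symmetric_eq_twice_card_pairs[of F crosses] crosses_sym crosses_irrefl by metis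

lemma two_factor_edgeE:
  assumes "two_factor N F" "f \<in> F"
  obtains a b where "f = {a,b}" "a \<in> {1..N}" "b \<in> {1..N}" "a < b"
proof -
  obtain i j where ij: "f = {i,j}" "i \<in> {1..N}" "j \<in> {1..N}" "i \<noteq> j"
    using assms unfolding two_factor_def by blast
  show ?thesis
  proof (cases "i < j")
    case True then show ?thesis using ij that by blast
  next
    case False
    then show ?thesis using ij that[of j i] by (simp add: insert_commute)
  qed
qed

lemma two_factor_edge_subset: "two_factor N F \<Longrightarrow> f \<in> F \<Longrightarrow> card f = 2 \<and> f \<subseteq> {1..N}"
  by (erule two_factor_edgeE) auto

lemma two_factor_finite: "two_factor N F \<Longrightarrow> finite F"
  using two_factor_edge_subset by (meson PowI finite_Pow_iff finite_atLeastAtMost finite_subset subsetI)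

lemma two_factor_degree: "two_factor N F \<Longrightarrow> v \<in> {1..N} \<Longrightarrow> card {f\<in>F. v \<in> f} = 2"
  unfolding two_factor_def by blast

lemma two_factor_card: "two_factor N F \<Longrightarrow> card F = N"
proof -
  assume tf: "two_factor N F"
  have "2 * N = (\<Sum>v\<in>{1..N}. card {f\<in>F. v \<in> f})" using two_factor_degree[OF tf] by simp
  also have "\<dots> = (\<Sum>f\<in>F. card (f \<inter> {1..N}))"
    using sum_card_incident two_factor_finite[OF tf] by blast
  also have "\<dots> = (\<Sum>f\<in>F. 2)"
    using two_factor_edge_subset[OF tf] by (intro sum.cong) (auto simp: Int_absorb2)
  finally show ?thesis by simp
qed

lemma two_factor_other_edge:
  assumes tf: "two_factor N F" and "e \<in> F" "v \<in> e"
  shows "\<exists>g\<in>F. v \<in> g \<and> g \<noteq> e"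
proof (rule ccontr)
  assume "\<not> ?thesis"
  then have "{f\<in>F. v \<in> f} = {e}" using assms by blast
  moreover have "v \<in> {1..N}" using two_factor_edge_subset[OF tf] assms by blast
  ultimately show False using two_factor_degree[OF tf] by fastforce
qed

lemma two_factor_edge_atE:
  assumes "two_factor N F" "g \<in> F" "v \<in> g"
  obtains w where "g = {v, w}" "w \<in> {1..N}" "w \<noteq> v"
proof -
  obtain a b where ab: "g = {a,b}" "a \<in> {1..N}" "b \<in> {1..N}" "a < b"
    using two_factor_edgeE[OF assms(1,2)] by blast
  then consider "v = a" | "v = b" using assms(3) by blast
  then show ?thesis
  proof cases
    case 1 then show ?thesis using ab that by blast
  next
    case 2 then show ?thesis using ab that[of a] by (auto simp: insert_commute)
  qed
qed

definition crossing_edges :: "nat set set \<Rightarrow> nat set \<Rightarrow> nat set set" where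
  "crossing_edges F e = {f\<in>F. crosses e f}"

definition outside :: "nat \<Rightarrow> nat \<Rightarrow> nat \<Rightarrow> nat set" where
  "outside N i j = {1..N} - {i..j}"

lemma card_outside:
  "i \<in> {1..N} \<Longrightarrow> j \<in> {1..N} \<Longrightarrow> i < j \<Longrightarrow> card (outside N i j) = N - (j - i) - 1"
proof -
  assume h: "i \<in> {1..N}" "j \<in> {1..N}" "i < j"
  have "outside N i j = {1..<i} \<union> {j<..N}" unfolding outside_def using h by auto
  moreover have "card ({1..<i} \<union> {j<..N}) = (i - 1) + (N - j)"
    using h by (subst card_Un_disjoint) auto
  ultimately show ?thesis using h by simp
qed

lemma crosses_iff_inside_outside:
  assumes "i < j" "a \<in> {1..N}" "b \<in> {1..N}"
  shows "crosses {i,j} {a,b} \<longleftrightarrow>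
    (a \<in> {i<..<j} \<and> b \<in> outside N i j) \<or> (b \<in> {i<..<j} \<and> a \<in> outside N i j)"
  unfolding crosses_iff[OF assms(1)] outside_def using assms by auto

lemma crossing_edge_sides:
  assumes tf: "two_factor N F" and ij: "i < j" and f: "f \<in> crossing_edges F {i,j}"
  shows "card (f \<inter> {i<..<j}) = 1" "card (f \<inter> outside N i j) = 1" "i \<notin> f" "j \<notin> f"
proof -
  obtain a b where ab: "f = {a,b}" "a \<in> {1..N}" "b \<in> {1..N}" "a < b"
    using f two_factor_edgeE[OF tf] unfolding crossing_edges_def by blast
  have "crosses {i,j} f" using f unfolding crossing_edges_def by simp
  then have io: "(a \<in> {i<..<j} \<and> b \<in> outside N i j) \<or> (b \<in> {i<..<j} \<and> a \<in> outside N i j)"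
    using crosses_iff_inside_outside[OF ij ab(2,3)] ab by simp
  have "{i<..<j} \<inter> outside N i j = {}" "i \<notin> outside N i j" "j \<notin> outside N i j"
    unfolding outside_def using ij by auto
  then have "(f \<inter> {i<..<j} = {a} \<and> f \<inter> outside N i j = {b}) \<or>
             (f \<inter> {i<..<j} = {b} \<and> f \<inter> outside N i j = {a})"
    using io ab by auto
  then show "card (f \<inter> {i<..<j}) = 1" "card (f \<inter> outside N i j) = 1" by auto
  show "i \<notin> f" "j \<notin> f" using io ab \<open>i \<notin> outside N i j\<close> \<open>j \<notin> outside N i j\<close> by auto
qed

lemma card_crossing_edges_side:
  assumes tf: "two_factor N F" and SV: "S \<subseteq> {1..N}"
    and one: "\<And>f. f \<in> crossing_edges F e \<Longrightarrow> card (f \<inter> S) = 1"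
  shows "card (crossing_edges F e) + (\<Sum>f\<in>F - crossing_edges F e. card (f \<inter> S)) = 2 * card S"
proof -
  have fin: "finite F" using two_factor_finite[OF tf] .
  have finS: "finite S" using SV finite_subset by blast
  have sub: "crossing_edges F e \<subseteq> F" unfolding crossing_edges_def by auto
  have "2 * card S = (\<Sum>v\<in>S. card {f\<in>F. v \<in> f})"
    using two_factor_degree[OF tf] SV by (simp add: subset_iff)
  also have "\<dots> = (\<Sum>f\<in>F. card (f \<inter> S))" using sum_card_incident[OF finS fin] .
  also have "\<dots> = (\<Sum>f\<in>crossing_edges F e. card (f \<inter> S)) + (\<Sum>f\<in>F - crossing_edges F e. card (f \<inter> S))"
    using fin sub by (metis add.commute sum.subset_diff)
  also have "(\<Sum>f\<in>crossing_edges F e. card (f \<inter> S)) = card (crossing_edges F e)"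
    using one by simp
  finally show ?thesis by simp
qed

lemma card_crossing_edges_inside:
  assumes tf: "two_factor N F" and ij: "i < j" "i \<in> {1..N}" "j \<in> {1..N}"
  shows "card (crossing_edges F {i,j}) + (\<Sum>f\<in>F - crossing_edges F {i,j}. card (f \<inter> {i<..<j}))
    = 2 * (j - i - 1)"
proof -
  have "{i<..<j} \<subseteq> {1..N}" using ij by auto
  then show ?thesis
    using card_crossing_edges_side[OF tf, of "{i<..<j}" "{i,j}"] crossing_edge_sides[OF tf ij(1)] by simp
qed

lemma card_crossing_edges_outside:
  assumes tf: "two_factor N F" and ij: "i < j" "i \<in> {1..N}" "j \<in> {1..N}"
  shows "card (crossing_edges F {i,j}) + (\<Sum>f\<in>F - crossing_edges F {i,j}. card (f \<inter> outside N i j))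
    = 2 * (N - (j - i) - 1)"
  using card_crossing_edges_side[OF tf, of "outside N i j" "{i,j}"] crossing_edge_sides[OF tf ij(1)]
    card_outside[OF ij(2,3,1)]
  by (auto simp: outside_def)

lemma crossing_edges_side_lower_bound:
  assumes tf: "two_factor N F" and "finite S"
  shows "card {f\<in>F - crossing_edges F e. f \<inter> S \<noteq> {}} \<le> (\<Sum>f\<in>F - crossing_edges F e. card (f \<inter> S))"
  using assms two_factor_finite card_meeting_le_sum_card_Int by blast

lemma card_crossing_edges_add_le_inside:
  assumes tf: "two_factor N F" and ij: "i < j" "i \<in> {1..N}" "j \<in> {1..N}"
    and A: "A \<subseteq> F - crossing_edges F {i,j}" "\<And>g. g \<in> A \<Longrightarrow> g \<inter> {i<..<j} \<noteq> {}"
  shows "card (crossing_edges F {i,j}) + card A \<le> 2 * (j - i - 1)"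
proof -
  have "finite F" using two_factor_finite[OF tf] .
  then have "card A \<le> card {f\<in>F - crossing_edges F {i,j}. f \<inter> {i<..<j} \<noteq> {}}"
    using A by (intro card_mono) auto
  also have "\<dots> \<le> (\<Sum>f\<in>F - crossing_edges F {i,j}. card (f \<inter> {i<..<j}))"
    using crossing_edges_side_lower_bound[OF tf] by simp
  finally show ?thesis using card_crossing_edges_inside[OF tf ij] by linarith
qed

lemma card_crossing_edges_add_le_outside:
  assumes tf: "two_factor N F" and ij: "i < j" "i \<in> {1..N}" "j \<in> {1..N}"
    and A: "A \<subseteq> F - crossing_edges F {i,j}" "\<And>g. g \<in> A \<Longrightarrow> g \<inter> outside N i j \<noteq> {}"
  shows "card (crossing_edges F {i,j}) + card A \<le> 2 * (N - (j - i) - 1)"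
proof -
  have "finite F" using two_factor_finite[OF tf] .
  then have "card A \<le> card {f\<in>F - crossing_edges F {i,j}. f \<inter> outside N i j \<noteq> {}}"
    using A by (intro card_mono) auto
  also have "\<dots> \<le> (\<Sum>f\<in>F - crossing_edges F {i,j}. card (f \<inter> outside N i j))"
    using crossing_edges_side_lower_bound[OF tf] by (simp add: outside_def)
  finally show ?thesis using card_crossing_edges_outside[OF tf ij] by linarith
qed

lemma non_crossing_edge_at_endpoint:
  assumes tf: "two_factor N F" and e: "{i,j} \<in> F" and ij: "i < j" and v: "v = i \<or> v = j"
  obtains w where "{v,w} \<in> F - crossing_edges F {i,j}" "{v,w} \<noteq> {i,j}"
    "w \<in> {i<..<j} \<or> w \<in> outside N i j"
proof -
  obtain g where g: "g \<in> F" "v \<in> g" "g \<noteq> {i,j}" using two_factor_other_edge[OF tf e] v by blast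
  obtain w where w: "g = {v,w}" "w \<in> {1..N}" "w \<noteq> v" using two_factor_edge_atE[OF tf g(1,2)] by blast
  have "w \<noteq> i" "w \<noteq> j" using w g v by auto
  then have "w \<in> {i<..<j} \<or> w \<in> outside N i j" using w ij unfolding outside_def by auto
  moreover have "g \<notin> crossing_edges F {i,j}" using crossing_edge_sides(3,4)[OF tf ij] g v by blast
  ultimately show ?thesis using that g w by blast
qed

lemma non_crossing_edge_other_end:
  assumes tf: "two_factor N F" and ij: "i < j" "i \<in> {1..N}" "j \<in> {1..N}"
    and S: "S = {i<..<j} \<or> S = outside N i j"
    and f: "f \<in> F - crossing_edges F {i,j}" and x: "x \<in> f" "x \<in> S"
  obtains y where "f = {x, y}" "x \<noteq> y" "y \<in> S \<or> y = i \<or> y = j"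
proof -
  obtain y where y: "f = {x, y}" "y \<in> {1..N}" "y \<noteq> x" using two_factor_edge_atE[OF tf _ x(1)] f by blast
  have x_in: "x \<in> {1..N}" using x(2) S ij unfolding outside_def by auto
  have "\<not> crosses {i,j} {x,y}" using f y(1) unfolding crossing_edges_def by simp
  then have no_cross: "\<not> (x \<in> {i<..<j} \<and> y \<in> outside N i j) \<and> \<not> (y \<in> {i<..<j} \<and> x \<in> outside N i j)"
    using crosses_iff_inside_outside[OF ij(1) x_in y(2)] by simp
  have "y \<in> {i<..<j} \<or> y \<in> outside N i j \<or> y = i \<or> y = j"
    using y(2) unfolding outside_def by auto
  moreover have "{i<..<j} \<inter> outside N i j = {}" unfolding outside_def by auto
  ultimately have "y \<in> S \<or> y = i \<or> y = j" using S x(2) no_cross by blast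
  then show ?thesis using that y by blast
qed

lemma cycle_edges_eq_image: "cycle_edges vs = (\<lambda>i. {vs ! i, vs ! ((i + 1) mod length vs)}) ` {..<length vs}"
  unfolding cycle_edges_def by auto

lemma cycle_edges_4: "cycle_edges [a, b, c, d] = {{d, a}, {c, d}, {b, c}, {a, b}}"
  unfolding cycle_edges_eq_image by (simp add: lessThan_Suc)

lemma cycle_edges_6: "cycle_edges [a, b, c, d, e, f] = {{f, a}, {e, f}, {d, e}, {c, d}, {b, c}, {a, b}}"
  unfolding cycle_edges_eq_image by (simp add: lessThan_Suc)

section \<open>Diameters and near-diameters\<close>

locale twice_odd =
  fixes N m :: nat
  assumes N_eq: "N = 2 * m" and odd_m: "odd m" and m_ge_3: "3 \<le> m"
begin

lemma N_ge_6: "6 \<le> N" using N_eq m_ge_3 by simp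

abbreviation V where "V \<equiv> {1..N}"
abbreviation rot where "rot k w \<equiv> shift_idx N k w"
abbreviation opp where "opp w \<equiv> rot m w"
abbreviation fwd where "fwd w \<equiv> rot (m - 1) w"
abbreviation bwd where "bwd w \<equiv> rot (m + 1) w"

lemma rot_eq: "w \<in> V \<Longrightarrow> k < N \<Longrightarrow> rot k w = (if w + k \<le> N then w + k else w + k - N)"
  unfolding shift_idx_def by (auto simp: mod_if)

lemma rot_in: "rot k w \<in> V"
  unfolding shift_idx_def using N_ge_6 by (simp add: Suc_leI)

lemma rot_rot: "rot a (rot b w) = rot (a + b) w"
proof -
  have "((w - 1 + b) mod N + a) mod N = (w - 1 + b + a) mod N" by (rule mod_add_left_eq)
  then show ?thesis unfolding shift_idx_def by (simp add: ac_simps)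
qed

lemma rot_mod: "rot (k mod N) w = rot k w"
  unfolding shift_idx_def by (simp add: mod_add_right_eq)

lemma rot_0: "w \<in> V \<Longrightarrow> rot 0 w = w"
  unfolding shift_idx_def by auto

lemma rot_add_N: "rot (k + N) w = rot k w"
  using rot_mod[of "k + N" w] rot_mod[of k w] by simp

lemma rot_N: "w \<in> V \<Longrightarrow> rot N w = w"
  using rot_add_N[of 0 w] rot_0 by simp

lemma rot_eq_rot_iff: "w \<in> V \<Longrightarrow> a < N \<Longrightarrow> b < N \<Longrightarrow> rot a w = rot b w \<longleftrightarrow> a = b"
  by (auto simp: rot_eq split: if_splits)

lemma m_less_N: "m < N" "m - 1 < N" "m + 1 < N" using m_ge_3 N_eq by auto

lemma rot_eq_self_iff: "u \<in> V \<Longrightarrow> r < N \<Longrightarrow> rot r u = u \<longleftrightarrow> r = 0"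
  using rot_eq_rot_iff[of u r 0] rot_0 N_ge_6 by auto

lemma rot_eq_opp_iff: "u \<in> V \<Longrightarrow> r < N \<Longrightarrow> rot r u = opp u \<longleftrightarrow> r = m"
  using rot_eq_rot_iff[of u r m] m_less_N by auto

lemma rot_surj: "u \<in> V \<Longrightarrow> w \<in> V \<Longrightarrow> \<exists>r<N. rot r u = w"
proof -
  assume u: "u \<in> V" and w: "w \<in> V"
  define r where "r = (w + N - u) mod N"
  have "(u - 1 + r) mod N = (u - 1 + (w + N - u)) mod N" unfolding r_def by (simp add: mod_add_right_eq)
  also have "u - 1 + (w + N - u) = (w - 1) + N" using u w by simp
  also have "((w - 1) + N) mod N = w - 1" using w by (subst mod_add_self2) auto
  finally have "rot r u = w" unfolding shift_idx_def using w by simp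
  moreover have "r < N" using N_ge_6 unfolding r_def by simp
  ultimately show ?thesis by blast
qed

lemma rot_1: "r < N \<Longrightarrow> rot r 1 = r + 1"
  using rot_eq[of 1 r] N_ge_6 by simp

lemma opp_eq: "w \<in> V \<Longrightarrow> opp w = (if w \<le> m then w + m else w - m)"
  using rot_eq[OF _ m_less_N(1)] N_eq by auto

lemma fwd_eq: "w \<in> V \<Longrightarrow> fwd w = (if w \<le> m + 1 then w + m - 1 else w - m - 1)"
  using rot_eq[OF _ m_less_N(2)] N_eq m_ge_3 by auto

lemma bwd_eq: "w \<in> V \<Longrightarrow> bwd w = (if w \<le> m - 1 then w + m + 1 else w + 1 - m)"
  using rot_eq[OF _ m_less_N(3)] N_eq m_ge_3 by auto

lemma rot_m_m: "w \<in> V \<Longrightarrow> rot (m + m) w = w"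
  using rot_N N_eq by (simp add: mult_2)

lemma fwd_bwd: "w \<in> V \<Longrightarrow> fwd (bwd w) = w"
  using rot_rot[of "m - 1" "m + 1" w] rot_m_m m_ge_3 by simp

lemma bwd_fwd: "w \<in> V \<Longrightarrow> bwd (fwd w) = w"
  using rot_rot[of "m + 1" "m - 1" w] rot_m_m m_ge_3 by simp

lemma opp_opp: "w \<in> V \<Longrightarrow> opp (opp w) = w"
  using rot_rot[of m m w] rot_m_m by simp

lemma opp_fwd_bwd_distinct:
  assumes "w \<in> V"
  shows "opp w \<noteq> w" "fwd w \<noteq> w" "bwd w \<noteq> w" "opp w \<noteq> fwd w" "opp w \<noteq> bwd w" "fwd w \<noteq> bwd w"
  using rot_eq_rot_iff[OF assms] rot_eq_self_iff[OF assms] m_less_N m_ge_3 by auto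

lemma fwd_fwd_neq: "w \<in> V \<Longrightarrow> fwd (fwd w) \<noteq> w"
  using rot_rot[of "m - 1" "m - 1" w] rot_eq_self_iff[of w "m - 1 + (m - 1)"] N_eq m_ge_3 by simp

definition diameter :: "nat set \<Rightarrow> bool" where
  "diameter f \<longleftrightarrow> (\<exists>a. f = {a, a + m} \<and> 1 \<le> a \<and> a + m \<le> N)"

definition near_diameter :: "nat set \<Rightarrow> bool" where
  "near_diameter f \<longleftrightarrow> (\<exists>a. (f = {a, a + m - 1} \<and> 1 \<le> a \<and> a + m - 1 \<le> N) \<or>
                            (f = {a, a + m + 1} \<and> 1 \<le> a \<and> a + m + 1 \<le> N))"

lemma diameter_iff: "i < j \<Longrightarrow> diameter {i,j} \<longleftrightarrow> (j = i + m \<and> 1 \<le> i \<and> j \<le> N)"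
  unfolding diameter_def by (auto simp: doubleton_eq_iff)

lemma near_diameter_iff:
  "i < j \<Longrightarrow> near_diameter {i,j} \<longleftrightarrow> ((j = i + m - 1 \<or> j = i + m + 1) \<and> 1 \<le> i \<and> j \<le> N)"
  unfolding near_diameter_def using m_ge_3 by (auto simp: doubleton_eq_iff)

lemma not_diameter_and_near_diameter: "\<not> (diameter f \<and> near_diameter f)"
  unfolding diameter_def near_diameter_def using m_ge_3 by (auto simp: doubleton_eq_iff)

lemma not_diameter_if_distant:
  assumes "a + m - 1 \<noteq> b" "b + m - 1 \<noteq> a" "a + m \<noteq> b" "b + m \<noteq> a" "a + m + 1 \<noteq> b" "b + m + 1 \<noteq> a"
  shows "\<not> diameter {a, b} \<and> \<not> near_diameter {a, b}"
  using assms unfolding diameter_def near_diameter_def by (auto simp: doubleton_eq_iff)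

lemma diameter_opp:
  assumes w: "w \<in> V"
  shows "diameter {w, opp w}"
proof (cases "w \<le> m")
  case True
  then show ?thesis unfolding diameter_def using opp_eq[OF w] w N_eq by auto
next
  case False
  then have "{w, opp w} = {w - m, (w - m) + m}" using opp_eq[OF w] by auto
  then show ?thesis unfolding diameter_def using False w N_eq by (intro exI[of _ "w - m"]) auto
qed

lemma opp_edge_cases:
  assumes w: "w \<in> V"
  obtains i where "i \<in> V" "i \<le> m" "{w, opp w} = {i, i + m}" "w = i \<and> opp w = i + m \<or> w = i + m \<and> opp w = i"
proof (cases "w \<le> m")
  case True
  then show ?thesis using that[of w] w opp_eq[OF w] by simp
next
  case False
  then show ?thesis using that[of "w - m"] w opp_eq[OF w] N_eq by (simp add: insert_commute)
qed

lemma near_diameter_fwd: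
  assumes w: "w \<in> V"
  shows "near_diameter {w, fwd w}"
proof (cases "w \<le> m + 1")
  case True
  then have "{w, fwd w} = {w, w + m - 1}" using fwd_eq[OF w] by simp
  moreover have "w + m - 1 \<le> N" using True N_eq m_ge_3 by simp
  ultimately show ?thesis unfolding near_diameter_def using w by (intro exI[of _ w] disjI1) simp
next
  case False
  define a where "a = w - m - 1"
  have "fwd w = a" "w = a + m + 1" using fwd_eq[OF w] False unfolding a_def by auto
  then have "{w, fwd w} = {a, a + m + 1}" by auto
  moreover have "1 \<le> a" "a + m + 1 \<le> N" using False w N_eq unfolding a_def by auto
  ultimately show ?thesis unfolding near_diameter_def by (intro exI[of _ a] disjI2) simp
qed

lemma near_diameter_bwd: "w \<in> V \<Longrightarrow> near_diameter {w, bwd w}"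
  using near_diameter_fwd[OF rot_in, of "m + 1" w] fwd_bwd by (simp add: insert_commute)

lemma diameter_at:
  assumes w: "w \<in> f" and "diameter f"
  shows "f = {w, opp w}"
proof -
  obtain a where a: "f = {a, a + m}" "1 \<le> a" "a + m \<le> N"
    using assms(2) unfolding diameter_def by blast
  then have "w = a \<or> w = a + m" using w by blast
  then show ?thesis using a opp_eq[of a] opp_eq[of "a + m"] N_eq by auto
qed

lemma near_diameter_at:
  assumes w: "w \<in> f" and "near_diameter f"
  shows "f = {w, fwd w} \<or> f = {w, bwd w}"
proof -
  obtain a where "(f = {a, a + m - 1} \<and> 1 \<le> a \<and> a + m - 1 \<le> N) \<or>
                  (f = {a, a + m + 1} \<and> 1 \<le> a \<and> a + m + 1 \<le> N)"
    using assms(2) unfolding near_diameter_def by blast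
  then show ?thesis
  proof
    assume a: "f = {a, a + m - 1} \<and> 1 \<le> a \<and> a + m - 1 \<le> N"
    have aV: "a \<in> V" "a + m - 1 \<in> V" using a m_ge_3 by auto
    have "a \<le> m + 1" using a N_eq by linarith
    then have "fwd a = a + m - 1" using fwd_eq[OF aV(1)] by simp
    moreover have "\<not> a + m - 1 \<le> m - 1" using a m_ge_3 by linarith
    then have "bwd (a + m - 1) = a" using bwd_eq[OF aV(2)] m_ge_3 by simp
    moreover have "w = a \<or> w = a + m - 1" using a w by simp
    ultimately show ?thesis using a by (elim disjE) (simp_all add: insert_commute)
  next
    assume a: "f = {a, a + m + 1} \<and> 1 \<le> a \<and> a + m + 1 \<le> N"
    have aV: "a \<in> V" "a + m + 1 \<in> V" using a by auto
    have "a \<le> m - 1" using a N_eq by linarith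
    then have "bwd a = a + m + 1" using bwd_eq[OF aV(1)] by simp
    moreover have "fwd (a + m + 1) = a" using fwd_eq[OF aV(2)] a by simp
    moreover have "w = a \<or> w = a + m + 1" using a w by simp
    ultimately show ?thesis using a by (elim disjE) (simp_all add: insert_commute)
  qed
qed

lemma edge_at_cases:
  assumes "diameter f \<or> near_diameter f" "v \<in> f"
  shows "f = {v, opp v} \<or> f = {v, fwd v} \<or> f = {v, bwd v}"
  using assms(1) diameter_at[OF assms(2)] near_diameter_at[OF assms(2)] by (elim disjE) simp_all

section \<open>The upper bound\<close>

definition crossing_bound :: "nat set \<Rightarrow> nat" where
  "crossing_bound e = (if diameter e then N - 3 else if near_diameter e then N - 4 else N - 6)"

lemma card_crossing_edges_diameter_le:
  assumes tf: "two_factor N F" and e: "{i, i + m} \<in> F" and i: "i \<in> V" "i \<le> m"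
  shows "card (crossing_edges F {i, i + m}) \<le> N - 3"
proof -
  have ij: "i < i + m" "i + m \<in> V" using i N_eq m_ge_3 by auto
  obtain w where w: "{i,w} \<in> F - crossing_edges F {i, i + m}"
      "w \<in> {i<..<i + m} \<or> w \<in> outside N i (i + m)"
    using non_crossing_edge_at_endpoint[OF tf e ij(1)] by blast
  then show ?thesis
    using card_crossing_edges_add_le_inside[OF tf ij(1) i(1) ij(2), of "{{i,w}}"]
      card_crossing_edges_add_le_outside[OF tf ij(1) i(1) ij(2), of "{{i,w}}"] N_eq
    by auto
qed

lemma tight_diameter_other_edges:
  assumes tf: "two_factor N F" and e: "{i, i + m} \<in> F" and i: "i \<in> V" "i \<le> m"
    and tight: "card (crossing_edges F {i, i + m}) = N - 3"
    and g1: "{i, w1} \<in> F" "w1 \<noteq> i + m" and g2: "{i + m, w2} \<in> F" "w2 \<noteq> i"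
  shows "\<not> (w1 \<in> {i<..<i + m} \<and> w2 \<in> {i<..<i + m})"
    "\<not> (w1 \<in> outside N i (i + m) \<and> w2 \<in> outside N i (i + m))"
proof -
  have ij: "i < i + m" "i + m \<in> V" using i N_eq m_ge_3 by auto
  have A: "{{i, w1}, {i + m, w2}} \<subseteq> F - crossing_edges F {i, i + m}"
    using g1 g2 crossing_edge_sides(3,4)[OF tf ij(1)] by blast
  have "card {{i, w1}, {i + m, w2}} = 2" using g1 g2 ij by (auto simp: doubleton_eq_iff)
  then have many: "2 * (m - 1) < card (crossing_edges F {i, i + m}) + card {{i, w1}, {i + m, w2}}"
    using tight N_eq m_ge_3 by simp
  show "\<not> (w1 \<in> {i<..<i + m} \<and> w2 \<in> {i<..<i + m})"
  proof
    assume "w1 \<in> {i<..<i + m} \<and> w2 \<in> {i<..<i + m}"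
    then have "card (crossing_edges F {i, i + m}) + card {{i, w1}, {i + m, w2}} \<le> 2 * (i + m - i - 1)"
      by (intro card_crossing_edges_add_le_inside[OF tf ij(1) i(1) ij(2) A]) auto
    then show False using many by simp
  qed
  show "\<not> (w1 \<in> outside N i (i + m) \<and> w2 \<in> outside N i (i + m))"
  proof
    assume "w1 \<in> outside N i (i + m) \<and> w2 \<in> outside N i (i + m)"
    then have "card (crossing_edges F {i, i + m}) + card {{i, w1}, {i + m, w2}} \<le> 2 * (N - (i + m - i) - 1)"
      by (intro card_crossing_edges_add_le_outside[OF tf ij(1) i(1) ij(2) A]) auto
    then show False using many N_eq by simp
  qed
qed

lemma card_crossing_edges_le_bound:
  assumes tf: "two_factor N F" and e: "e \<in> F"
  shows "card (crossing_edges F e) \<le> crossing_bound e"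
proof -
  obtain i j where ij: "e = {i,j}" "i \<in> V" "j \<in> V" "i < j" using two_factor_edgeE[OF tf e] by blast
  have inside: "card (crossing_edges F e) \<le> 2 * (j - i - 1)"
    using card_crossing_edges_inside[OF tf ij(4,2,3)] ij(1) by simp
  have outside: "card (crossing_edges F e) \<le> 2 * (N - (j - i) - 1)"
    using card_crossing_edges_outside[OF tf ij(4,2,3)] ij(1) by simp
  consider "diameter e" | "\<not> diameter e" "near_diameter e" | "\<not> diameter e" "\<not> near_diameter e"
    by blast
  then show ?thesis
  proof cases
    case 1
    then have "j = i + m" "i \<le> m" using diameter_iff[OF ij(4)] ij N_eq by auto
    then show ?thesis using card_crossing_edges_diameter_le[OF tf] e ij 1
      unfolding crossing_bound_def by simp
  next
    case 2
    then have "j = i + m - 1 \<or> j = i + m + 1" using near_diameter_iff[OF ij(4)] ij by simp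
    then show ?thesis using inside outside 2 N_eq m_ge_3 unfolding crossing_bound_def by auto
  next
    case 3
    then have "j \<noteq> i + m" "j \<noteq> i + m - 1" "j \<noteq> i + m + 1"
      using diameter_iff[OF ij(4)] near_diameter_iff[OF ij(4)] ij by auto
    then have "j - i \<le> m - 2 \<or> j - i \<ge> m + 2" using ij m_ge_3 by linarith
    then show ?thesis using inside outside 3 N_eq m_ge_3 ij unfolding crossing_bound_def by auto
  qed
qed

definition diameter_edges :: "nat set set \<Rightarrow> nat set set" where
  "diameter_edges F = {e\<in>F. diameter e}"

definition short_edges :: "nat set set \<Rightarrow> nat set set" where
  "short_edges F = {e\<in>F. \<not> diameter e \<and> \<not> near_diameter e}"

lemma diameter_edges_eq: "diameter_edges F = (\<lambda>a. {a, a + m}) ` {a\<in>{1..m}. {a, a + m} \<in> F}"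
  unfolding diameter_edges_def diameter_def using N_eq by auto

lemma card_diameter_edges: "card (diameter_edges F) = card {a\<in>{1..m}. {a, a + m} \<in> F}"
  unfolding diameter_edges_eq by (rule card_image) (auto intro: inj_onI simp: doubleton_eq_iff)

lemma card_diameter_edges_le: "card (diameter_edges F) \<le> m"
  unfolding card_diameter_edges by (metis (no_types, lifting) card_atLeastAtMost card_mono
      diff_Suc_1 finite_atLeastAtMost mem_Collect_eq subsetI)

lemma sum_crossing_bound:
  assumes tf: "two_factor N F"
  shows "(\<Sum>e\<in>F. crossing_bound e) + 2 * card (short_edges F) = N * (N - 4) + card (diameter_edges F)"
proof -
  have fin: "finite F" using two_factor_finite[OF tf] .
  have "(\<Sum>e\<in>F. crossing_bound e) + 2 * card (short_edges F) =
      (\<Sum>e\<in>F. crossing_bound e + (if \<not> diameter e \<and> \<not> near_diameter e then 2 else 0))"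
    using fin by (simp add: sum.distrib sum.If_cases short_edges_def Int_def)
  also have "\<dots> = (\<Sum>e\<in>F. (N - 4) + (if diameter e then 1 else 0))"
    using N_ge_6 by (intro sum.cong) (auto simp: crossing_bound_def)
  also have "\<dots> = N * (N - 4) + card (diameter_edges F)"
    using fin two_factor_card[OF tf] by (simp add: sum.distrib sum.If_cases diameter_edges_def Int_def)
  finally show ?thesis .
qed

lemma twice_crossings_eq_sum_crossing_edges:
  "two_factor N F \<Longrightarrow> 2 * crossings F = (\<Sum>e\<in>F. card (crossing_edges F e))"
  using twice_crossings_eq_sum two_factor_finite unfolding crossing_edges_def by simp

lemma twice_crossings_le:
  assumes tf: "two_factor N F"
  shows "2 * crossings F + 2 * card (short_edges F) \<le> N * (N - 4) + card (diameter_edges F)"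
proof -
  have "2 * crossings F \<le> (\<Sum>e\<in>F. crossing_bound e)"
    unfolding twice_crossings_eq_sum_crossing_edges[OF tf]
    using card_crossing_edges_le_bound[OF tf] by (intro sum_mono) auto
  then show ?thesis using sum_crossing_bound[OF tf] by linarith
qed

lemma twice_crossings_le_max: "two_factor N G \<Longrightarrow> 2 * crossings G \<le> N * (N - 4) + m - 1"
proof -
  assume tf: "two_factor N G"
  have "2 * crossings G \<le> N * (N - 4) + m"
    using twice_crossings_le[OF tf] card_diameter_edges_le[of G] by linarith
  moreover have "even (N * (N - 4))" using N_eq by simp
  ultimately show ?thesis using odd_m by presburger
qed

section \<open>Shape of an optimal 2-factor\<close>

lemma edges_at_eq:
  assumes "short_edges F = {}" "w \<in> V"
  shows "{f\<in>F. w \<in> f} = {f\<in>{{w, opp w}, {w, fwd w}, {w, bwd w}}. f \<in> F}"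
proof -
  have "f = {w, opp w} \<or> f = {w, fwd w} \<or> f = {w, bwd w}" if "f \<in> F" "w \<in> f" for f
    using that assms(1) edge_at_cases unfolding short_edges_def by blast
  then show ?thesis by auto
qed

lemma degree_eq_indicators:
  assumes tf: "two_factor N F" and short: "short_edges F = {}" and w: "w \<in> V"
  shows "of_bool ({w, opp w} \<in> F) + of_bool ({w, fwd w} \<in> F) + of_bool ({w, bwd w} \<in> F) = (2::nat)"
proof -
  have "{w, opp w} \<noteq> {w, fwd w}" "{w, opp w} \<noteq> {w, bwd w}" "{w, fwd w} \<noteq> {w, bwd w}"
    using opp_fwd_bwd_distinct[OF w] by (auto simp: doubleton_eq_iff)
  from card_filter_three[OF this, of "\<lambda>f. f \<in> F"] show ?thesis
    using edges_at_eq[OF short w] two_factor_degree[OF tf w] by simp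
qed

lemma even_card_near_diameter_Int_evens:
  assumes "near_diameter f"
  shows "even (card (f \<inter> {w. even w}))"
proof -
  obtain a where "(f = {a, a + m - 1} \<and> 1 \<le> a \<and> a + m - 1 \<le> N) \<or>
                  (f = {a, a + m + 1} \<and> 1 \<le> a \<and> a + m + 1 \<le> N)"
    using assms unfolding near_diameter_def by blast
  then obtain d where f: "f = {a, a + d}" and d: "d = m - 1 \<or> d = m + 1"
  proof (elim disjE conjE)
    assume "f = {a, a + m - 1}"
    then show thesis using that[of "m - 1"] m_ge_3 by simp
  qed (use that[of "m + 1"] in simp)
  have "even d" "d \<noteq> 0" using d odd_m m_ge_3 by auto
  then have "f \<inter> {w. even w} = (if even a then f else {})" using f by auto
  then show ?thesis using f \<open>d \<noteq> 0\<close> by simp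
qed

lemma card_near_diameter_edges_at:
  assumes tf: "two_factor N F" and short: "short_edges F = {}" and w: "w \<in> V" and opp: "{w, opp w} \<in> F"
  shows "card {f\<in>{f\<in>F. near_diameter f}. w \<in> f} = 1"
proof -
  have "\<not> near_diameter {w, opp w}"
    using not_diameter_and_near_diameter diameter_opp[OF w] by blast
  have "{f\<in>{f\<in>F. near_diameter f}. w \<in> f} =
      {f\<in>{{w, opp w}, {w, fwd w}, {w, bwd w}}. f \<in> F \<and> near_diameter f}"
    using edges_at_eq[OF short w] by blast
  also have "\<dots> = {f\<in>{{w, opp w}, {w, fwd w}, {w, bwd w}}. f \<in> F \<and> f \<noteq> {w, opp w}}"
    using near_diameter_fwd[OF w] near_diameter_bwd[OF w] \<open>\<not> near_diameter {w, opp w}\<close> by auto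
  finally have "card {f\<in>{f\<in>F. near_diameter f}. w \<in> f} = of_bool ({w, fwd w} \<in> F) + of_bool ({w, bwd w} \<in> F)"
    using opp_fwd_bwd_distinct[OF w] card_filter_three[of "{w, opp w}" "{w, fwd w}" "{w, bwd w}"]
    by (simp add: doubleton_eq_iff)
  then show ?thesis using degree_eq_indicators[OF tf short w] opp by simp
qed

text \<open>If every diameter were present, the remaining near-diameter edges (joining vertices of equal
  parity, as \<open>m \<plusminus> 1\<close> is even) would form a perfect matching of the \<open>m\<close> even vertices; but \<open>m\<close> is odd.\<close>

lemma exists_missing_diameter:
  assumes tf: "two_factor N F" and short: "short_edges F = {}"
  shows "\<exists>a\<in>{1..m}. {a, a + m} \<notin> F"
proof (rule ccontr)
  assume "\<not> ?thesis"
  then have all: "{a, a + m} \<in> F" if "a \<in> {1..m}" for a using that by blast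
  have opp_in: "{w, opp w} \<in> F" if w: "w \<in> V" for w
  proof -
    obtain i where "i \<in> V" "i \<le> m" "{w, opp w} = {i, i + m}" using opp_edge_cases[OF w] by blast
    then show ?thesis using all[of i] by simp
  qed
  let ?L = "{f\<in>F. near_diameter f}" and ?E = "{w\<in>V. even w}"
  have "m = (\<Sum>w\<in>?E. card {f\<in>?L. w \<in> f})"
  proof -
    have "?E = (\<lambda>x. 2 * x) ` {1..m}" using N_eq by (auto elim!: evenE)
    then have "card ?E = m" by (simp add: card_image inj_on_def)
    then show ?thesis using card_near_diameter_edges_at[OF tf short _ opp_in] by simp
  qed
  also have "\<dots> = (\<Sum>f\<in>?L. card (f \<inter> ?E))"
    using two_factor_finite[OF tf] by (intro sum_card_incident) auto
  also have "\<dots> = (\<Sum>f\<in>?L. card (f \<inter> {w. even w}))"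
  proof (intro sum.cong refl arg_cong[where f = card])
    fix f assume "f \<in> ?L"
    then show "f \<inter> ?E = f \<inter> {w. even w}" using two_factor_edge_subset[OF tf] by blast
  qed
  also have "even \<dots>" using even_card_near_diameter_Int_evens by (intro dvd_sum) simp
  finally have "even m" .
  then show False using odd_m by simp
qed

lemma optimal_shape:
  assumes tf: "two_factor N F" and opt: "N * (N - 4) + m - 1 \<le> 2 * crossings F"
  shows "short_edges F = {}" "card (diameter_edges F) = m - 1"
    "\<And>e. e \<in> F \<Longrightarrow> card (crossing_edges F e) = crossing_bound e"
proof -
  have fin: "finite F" using two_factor_finite[OF tf] .
  have le: "2 * crossings F + 2 * card (short_edges F) \<le> N * (N - 4) + card (diameter_edges F)"
    using twice_crossings_le[OF tf] .
  have "card (short_edges F) = 0" using le opt card_diameter_edges_le[of F] m_ge_3 by linarith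
  then show short: "short_edges F = {}" using fin unfolding short_edges_def by simp
  have "{a\<in>{1..m}. {a, a + m} \<in> F} \<subset> {1..m}" using exists_missing_diameter[OF tf short] by blast
  then have "card (diameter_edges F) < m"
    unfolding card_diameter_edges by (metis card_atLeastAtMost diff_Suc_1 finite_atLeastAtMost psubset_card_mono)
  then show diam: "card (diameter_edges F) = m - 1" using le opt by linarith
  have eq: "(\<Sum>e\<in>F. card (crossing_edges F e)) = (\<Sum>e\<in>F. crossing_bound e)"
    using twice_crossings_le[OF tf] sum_crossing_bound[OF tf] opt diam short m_ge_3
      twice_crossings_eq_sum_crossing_edges[OF tf] by simp
  show "card (crossing_edges F e) = crossing_bound e" if "e \<in> F" for e
    using sum_mono_inv[OF eq card_crossing_edges_le_bound[OF tf] that fin] .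
qed

lemma fwd_bwd_sides:
  assumes i: "i \<in> V" "i \<le> m"
  shows "fwd i \<in> {i<..<i + m}" "bwd i \<in> outside N i (i + m)"
    "fwd (i + m) \<in> outside N i (i + m)" "bwd (i + m) \<in> {i<..<i + m}"
proof -
  have j: "i + m \<in> V" using i N_eq by auto
  show "fwd i \<in> {i<..<i + m}" using fwd_eq[OF i(1)] i m_ge_3 by auto
  show "bwd i \<in> outside N i (i + m)"
    using bwd_eq[OF i(1)] i m_ge_3 N_eq unfolding outside_def by (cases "i \<le> m - 1") auto
  show "fwd (i + m) \<in> outside N i (i + m)"
    using fwd_eq[OF j] i m_ge_3 N_eq unfolding outside_def by (cases "i = 1") auto
  show "bwd (i + m) \<in> {i<..<i + m}" using bwd_eq[OF j] i m_ge_3 by auto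
qed

definition fwd_edge :: "nat set set \<Rightarrow> nat \<Rightarrow> bool" where
  "fwd_edge F w \<longleftrightarrow> {w, fwd w} \<in> F"

lemma bwd_edge_iff_not_fwd_edge:
  assumes "two_factor N F" "short_edges F = {}" "w \<in> V" "{w, opp w} \<in> F"
  shows "{w, bwd w} \<in> F \<longleftrightarrow> \<not> fwd_edge F w"
  using degree_eq_indicators[OF assms(1-3)] assms(4) unfolding fwd_edge_def
  by (cases "{w, fwd w} \<in> F"; cases "{w, bwd w} \<in> F") simp_all

lemma fwd_and_bwd_edge:
  assumes "two_factor N F" "short_edges F = {}" "w \<in> V" "{w, opp w} \<notin> F"
  shows "{w, bwd w} \<in> F" "fwd_edge F w"
  using degree_eq_indicators[OF assms(1-3)] assms(4) unfolding fwd_edge_def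
  by (cases "{w, fwd w} \<in> F"; cases "{w, bwd w} \<in> F"; simp)+

lemma tight_diameter_fwd_edge_iff:
  assumes tf: "two_factor N F" and short: "short_edges F = {}" and i: "i \<in> V" "i \<le> m"
    and e: "{i, i + m} \<in> F" and tight: "card (crossing_edges F {i, i + m}) = N - 3"
  shows "fwd_edge F i \<longleftrightarrow> fwd_edge F (i + m)"
proof -
  have j: "i + m \<in> V" using i N_eq by auto
  have opp_i: "opp i = i + m" and opp_j: "opp (i + m) = i" using opp_eq[OF i(1)] opp_eq[OF j] i by auto
  have ei: "{i, opp i} \<in> F" and ej: "{i + m, opp (i + m)} \<in> F"
    using e opp_i opp_j by (auto simp: insert_commute)
  note sides = fwd_bwd_sides[OF i]
  note other = tight_diameter_other_edges[OF tf e i tight]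
  have ne: "fwd i \<noteq> i + m" "bwd i \<noteq> i + m" "fwd (i + m) \<noteq> i" "bwd (i + m) \<noteq> i"
    using opp_fwd_bwd_distinct[OF i(1)] opp_fwd_bwd_distinct[OF j] opp_i opp_j by metis+
  show ?thesis
  proof
    assume "fwd_edge F i"
    then show "fwd_edge F (i + m)"
      using other(1)[of "fwd i" "bwd (i + m)"] bwd_edge_iff_not_fwd_edge[OF tf short j ej] sides ne
      unfolding fwd_edge_def by blast
  next
    assume "fwd_edge F (i + m)"
    then show "fwd_edge F i"
      using other(2)[of "bwd i" "fwd (i + m)"] bwd_edge_iff_not_fwd_edge[OF tf short i(1) ei] sides ne
      unfolding fwd_edge_def by blast
  qed
qed

lemma card_crossing_edges_near_diameter:
  assumes tf: "two_factor N F" and short: "short_edges F = {}" and e: "e \<in> F" "near_diameter e"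
  shows "card (crossing_edges F e) = N - 4"
proof -
  obtain i j where ij: "e = {i,j}" "i \<in> V" "j \<in> V" "i < j" using two_factor_edgeE[OF tf e(1)] by blast
  have len: "j = i + m - 1 \<or> j = i + m + 1" using e(2) near_diameter_iff[OF ij(4)] ij(1) by simp
  define S where "S = (if j = i + m - 1 then {i<..<j} else outside N i j)"
  have S: "S = {i<..<j} \<or> S = outside N i j" unfolding S_def by simp
  have far: "\<not> diameter {x, y} \<and> \<not> near_diameter {x, y}" if "x \<in> S" "y \<in> S \<or> y = i \<or> y = j" for x y
  proof (cases "j = i + m - 1")
    case True
    then have "i < x \<and> x < j" "i \<le> y \<and> y \<le> j" using that unfolding S_def by auto
    then show ?thesis using True m_ge_3 by (intro not_diameter_if_distant) auto
  next
    case False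
    then have "j = i + m + 1" using len by simp
    moreover have "x < i \<or> j < x" "1 \<le> x" "x \<le> N" "y \<le> i \<or> j \<le> y" "1 \<le> y" "y \<le> N"
      using that False ij unfolding S_def outside_def by auto
    ultimately show ?thesis using N_eq ij(2,3) m_ge_3 by (intro not_diameter_if_distant) auto
  qed
  have zero: "card (f \<inter> S) = 0" if f: "f \<in> F - crossing_edges F {i,j}" for f
  proof (rule ccontr)
    assume "card (f \<inter> S) \<noteq> 0"
    then have "f \<inter> S \<noteq> {}" by (metis card.empty)
    then obtain x where x: "x \<in> f" "x \<in> S" by blast
    obtain y where y: "f = {x, y}" "x \<noteq> y" "y \<in> S \<or> y = i \<or> y = j"
      using non_crossing_edge_other_end[OF tf ij(4,2,3) S f x] .
    have "diameter f \<or> near_diameter f" using f short unfolding short_edges_def by blast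
    then show False using far[OF x(2) y(3)] y(1) by blast
  qed
  show ?thesis
  proof (cases "j = i + m - 1")
    case True
    then show ?thesis using card_crossing_edges_inside[OF tf ij(4,2,3)] zero N_eq m_ge_3
      unfolding ij(1) S_def by simp
  next
    case False
    then show ?thesis using card_crossing_edges_outside[OF tf ij(4,2,3)] zero len N_eq m_ge_3
      unfolding ij(1) S_def by simp
  qed
qed

lemma edge_at_diameter_end_inside:
  assumes short: "short_edges F = {}" and i: "i \<in> V" "i \<le> m" and f: "f \<in> F"
    and x: "x \<in> f" "x \<in> {i<..<i + m}" and ends: "i \<in> f \<or> i + m \<in> f"
  shows "f = {i, fwd i} \<or> f = {i + m, bwd (i + m)}"
proof -
  have j: "i + m \<in> V" using i N_eq by auto
  have opp_i: "opp i = i + m" and opp_j: "opp (i + m) = i" using opp_eq[OF i(1)] opp_eq[OF j] i by auto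
  note sides = fwd_bwd_sides[OF i]
  have out: "y \<notin> {i<..<i + m}" if "y \<in> outside N i (i + m)" for y using that unfolding outside_def by auto
  have f_cases: "diameter f \<or> near_diameter f" using f short unfolding short_edges_def by blast
  from ends show ?thesis
  proof
    assume "i \<in> f"
    then have "f = {i, opp i} \<or> f = {i, fwd i} \<or> f = {i, bwd i}" using edge_at_cases f_cases by blast
    then show ?thesis using x opp_i out[OF sides(2)] by auto
  next
    assume "i + m \<in> f"
    then have "f = {i + m, opp (i + m)} \<or> f = {i + m, fwd (i + m)} \<or> f = {i + m, bwd (i + m)}"
      using edge_at_cases f_cases by blast
    then show ?thesis using x opp_j out[OF sides(3)] by auto
  qed
qed

lemma card_crossing_edges_diameter_balanced:
  assumes tf: "two_factor N F" and short: "short_edges F = {}" and i: "i \<in> V" "i \<le> m"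
    and e: "{i, i + m} \<in> F" and par: "fwd_edge F i \<longleftrightarrow> fwd_edge F (i + m)"
    and bwd_i: "{i, bwd i} \<in> F \<longleftrightarrow> \<not> fwd_edge F i"
    and bwd_j: "{i + m, bwd (i + m)} \<in> F \<longleftrightarrow> \<not> fwd_edge F (i + m)"
  shows "card (crossing_edges F {i, i + m}) = N - 3"
proof -
  let ?j = "i + m" and ?I = "{i<..<i + m}"
  have ij: "i < ?j" "?j \<in> V" using i N_eq m_ge_3 by auto
  note sides = fwd_bwd_sides[OF i]
  define g where "g = (if fwd_edge F i then {i, fwd i} else {?j, bwd ?j})"
  have g: "g \<in> F - crossing_edges F {i, ?j}"
    using par bwd_j crossing_edge_sides(3,4)[OF tf ij(1)] unfolding g_def fwd_edge_def by auto
  have gI: "card (g \<inter> ?I) = 1"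
    using sides unfolding g_def outside_def by (cases "fwd_edge F i") (auto simp: Int_insert_left)
  have only_g: "f = g" if f: "f \<in> F - crossing_edges F {i, ?j}" and meets: "f \<inter> ?I \<noteq> {}" for f
  proof -
    obtain x where x: "x \<in> f" "x \<in> ?I" using meets by blast
    obtain y where y: "f = {x, y}" "x \<noteq> y" "y \<in> ?I \<or> y = i \<or> y = ?j"
      using non_crossing_edge_other_end[OF tf ij(1) i(1) ij(2) _ f x] by blast
    have "diameter f \<or> near_diameter f" using f short unfolding short_edges_def by blast
    moreover have "\<not> diameter {x, y} \<and> \<not> near_diameter {x, y}" if "y \<in> ?I"
      using x(2) that by (intro not_diameter_if_distant) auto
    ultimately have "i \<in> f \<or> ?j \<in> f" using y by blast
    then have "f = {i, fwd i} \<or> f = {?j, bwd ?j}"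
      using edge_at_diameter_end_inside[OF short i] f x by blast
    then show ?thesis using f par bwd_j unfolding g_def fwd_edge_def by auto
  qed
  have "(\<Sum>f\<in>F - crossing_edges F {i, ?j}. card (f \<inter> ?I)) = 1"
    using sum_card_Int_eq_single[OF _ g only_g] two_factor_finite[OF tf] gI by simp
  then show ?thesis using card_crossing_edges_inside[OF tf ij(1) i(1) ij(2)] N_eq m_ge_3 by simp
qed

definition extremal_pattern :: "nat \<Rightarrow> nat set set \<Rightarrow> bool" where
  "extremal_pattern u F \<longleftrightarrow> u \<in> V \<and> two_factor N F \<and> short_edges F = {} \<and>
     (\<forall>w\<in>V. {w, opp w} \<in> F \<longleftrightarrow> w \<noteq> u \<and> w \<noteq> opp u) \<and>
     (\<forall>w\<in>V. w \<noteq> u \<and> w \<noteq> opp u \<longrightarrow>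
        ({w, bwd w} \<in> F \<longleftrightarrow> \<not> fwd_edge F w) \<and> (fwd_edge F w \<longleftrightarrow> fwd_edge F (opp w))) \<and>
     fwd_edge F u \<and> {u, bwd u} \<in> F \<and> fwd_edge F (opp u) \<and> {opp u, bwd (opp u)} \<in> F"

lemma optimal_missing_diameter:
  assumes tf: "two_factor N F" and opt: "N * (N - 4) + m - 1 \<le> 2 * crossings F"
  obtains u where "u \<in> {1..m}" "\<And>w. w \<in> V \<Longrightarrow> {w, opp w} \<in> F \<longleftrightarrow> w \<noteq> u \<and> w \<noteq> opp u"
proof -
  let ?A = "{a\<in>{1..m}. {a, a + m} \<in> F}"
  have "card ?A = m - 1" using optimal_shape(2)[OF tf opt] card_diameter_edges by simp
  moreover have "card ({1..m} - ?A) = card {1..m} - card ?A"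
    by (rule card_Diff_subset) auto
  ultimately have "card ({1..m} - ?A) = 1" using m_ge_3 by simp
  then obtain u where u: "{1..m} - ?A = {u}" by (rule card_1_singletonE)
  have mem: "{a, a + m} \<notin> F \<longleftrightarrow> a = u" if "a \<in> {1..m}" for a
  proof -
    have "{a, a + m} \<notin> F \<longleftrightarrow> a \<in> {1..m} - ?A" using that by simp
    also have "\<dots> \<longleftrightarrow> a = u" by (simp only: u singleton_iff)
    finally show ?thesis .
  qed
  have "u \<in> {1..m} - ?A" by (simp only: u singleton_iff)
  then have u_le: "u \<in> {1..m}" by simp
  then have opp_u: "opp u = u + m" using opp_eq[of u] N_eq by simp
  have "{w, opp w} \<in> F \<longleftrightarrow> w \<noteq> u \<and> w \<noteq> opp u" if w: "w \<in> V" for w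
  proof -
    obtain i where i: "i \<in> V" "i \<le> m" "{w, opp w} = {i, i + m}"
        "w = i \<and> opp w = i + m \<or> w = i + m \<and> opp w = i"
      using opp_edge_cases[OF w] .
    have "{i, i + m} \<in> F \<longleftrightarrow> i \<noteq> u" using mem[of i] i by auto
    moreover have "i = u \<longleftrightarrow> w = u \<or> w = opp u" using i(2,4) u_le opp_u by auto
    ultimately show ?thesis using i(3) by simp
  qed
  with u_le show ?thesis by (rule that)
qed

lemma optimal_extremal_pattern:
  assumes tf: "two_factor N F" and opt: "N * (N - 4) + m - 1 \<le> 2 * crossings F"
  obtains u where "u \<in> {1..m}" "extremal_pattern u F"
proof -
  have short: "short_edges F = {}" and tight: "\<And>e. e \<in> F \<Longrightarrow> card (crossing_edges F e) = crossing_bound e"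
    using optimal_shape[OF tf opt] by auto
  obtain u where u: "u \<in> {1..m}" and opp_in: "\<And>w. w \<in> V \<Longrightarrow> {w, opp w} \<in> F \<longleftrightarrow> w \<noteq> u \<and> w \<noteq> opp u"
    using optimal_missing_diameter[OF tf opt] by blast
  have uV: "u \<in> V" "opp u \<in> V" using u N_eq rot_in by auto
  have "{u, opp u} \<notin> F" "{opp u, opp (opp u)} \<notin> F" using opp_in uV by auto
  note u_edges = fwd_and_bwd_edge[OF tf short uV(1) this(1)] fwd_and_bwd_edge[OF tf short uV(2) this(2)]
  have par: "fwd_edge F w \<longleftrightarrow> fwd_edge F (opp w)" if w: "w \<in> V" "w \<noteq> u" "w \<noteq> opp u" for w
  proof -
    obtain i where i: "i \<in> V" "i \<le> m" "{w, opp w} = {i, i + m}"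
        "w = i \<and> opp w = i + m \<or> w = i + m \<and> opp w = i"
      using opp_edge_cases[OF w(1)] .
    have e: "{i, i + m} \<in> F" using opp_in[OF w(1)] w(2,3) i(3) by simp
    moreover have "card (crossing_edges F {i, i + m}) = N - 3"
      using tight[OF e] diameter_opp[OF w(1)] i(3) unfolding crossing_bound_def by simp
    ultimately have "fwd_edge F i \<longleftrightarrow> fwd_edge F (i + m)"
      using tight_diameter_fwd_edge_iff[OF tf short i(1,2)] by blast
    then show ?thesis using i(4) by auto
  qed
  have "extremal_pattern u F"
    unfolding extremal_pattern_def
  proof (intro conjI ballI impI)
    fix w assume "w \<in> V" "w \<noteq> u \<and> w \<noteq> opp u"
    then show "{w, bwd w} \<in> F \<longleftrightarrow> \<not> fwd_edge F w" "fwd_edge F w \<longleftrightarrow> fwd_edge F (opp w)"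
      using bwd_edge_iff_not_fwd_edge[OF tf short] opp_in par by auto
  qed (use uV tf short opp_in u_edges in auto)
  then show ?thesis using that u by blast
qed

lemma extremal_patternD:
  assumes "extremal_pattern u F"
  shows "u \<in> V" "two_factor N F" "short_edges F = {}"
    "\<And>w. w \<in> V \<Longrightarrow> {w, opp w} \<in> F \<longleftrightarrow> w \<noteq> u \<and> w \<noteq> opp u"
    "\<And>w. w \<in> V \<Longrightarrow> w \<noteq> u \<Longrightarrow> w \<noteq> opp u \<Longrightarrow> {w, bwd w} \<in> F \<longleftrightarrow> \<not> fwd_edge F w"
    "\<And>w. w \<in> V \<Longrightarrow> w \<noteq> u \<Longrightarrow> w \<noteq> opp u \<Longrightarrow> fwd_edge F w \<longleftrightarrow> fwd_edge F (opp w)"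
    "fwd_edge F u" "{u, bwd u} \<in> F" "fwd_edge F (opp u)" "{opp u, bwd (opp u)} \<in> F"
  using assms unfolding extremal_pattern_def by auto

text \<open>The forward edge at \<open>w\<close> is the backward edge at \<open>fwd w\<close>, and \<open>opp (fwd w)\<close> is the
  predecessor of \<open>w\<close>.\<close>

lemma pattern_fwd_edge_step:
  assumes P: "extremal_pattern u F"
    and r: "r + 1 < N" "r + 1 \<noteq> m" "(r + m) mod N \<noteq> 0" "(r + m) mod N \<noteq> m"
  shows "fwd_edge F (rot r u) \<longleftrightarrow> \<not> fwd_edge F (rot (r + 1) u)"
proof -
  note P' = extremal_patternD[OF P]
  let ?w = "rot (r + 1) u"
  have w: "?w \<in> V" "?w \<noteq> u" "?w \<noteq> opp u"
    using rot_in rot_eq_self_iff[OF P'(1) r(1)] rot_eq_opp_iff[OF P'(1) r(1)] r(2) by auto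
  have fwd_w: "fwd ?w = rot ((r + m) mod N) u"
    using rot_rot[of "m - 1" "r + 1" u] rot_mod m_ge_3 by (simp add: ac_simps)
  have fw: "fwd ?w \<in> V" "fwd ?w \<noteq> u" "fwd ?w \<noteq> opp u"
    unfolding fwd_w using rot_in rot_eq_self_iff[OF P'(1)] rot_eq_opp_iff[OF P'(1)] r N_ge_6 by auto
  have "opp (fwd ?w) = rot (r + (m + m)) u"
    using rot_rot[of m "m - 1" ?w] rot_rot[of "m + (m - 1)" "r + 1" u] m_ge_3 by (simp add: algebra_simps)
  then have opp_fwd: "opp (fwd ?w) = rot r u" using rot_add_N N_eq by (simp add: mult_2)
  have "{fwd ?w, bwd (fwd ?w)} = {?w, fwd ?w}" using bwd_fwd[OF w(1)] by auto
  then have "fwd_edge F ?w \<longleftrightarrow> \<not> fwd_edge F (fwd ?w)"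
    using P'(5)[OF fw] unfolding fwd_edge_def by simp
  then show ?thesis using P'(6)[OF fw] opp_fwd by simp
qed

definition fwd_pattern :: "nat \<Rightarrow> bool" where
  "fwd_pattern r \<longleftrightarrow> r = 0 \<or> r = m \<or> (r < m \<and> odd r) \<or> (m < r \<and> even r)"

lemma pattern_fwd_edge_first_half:
  assumes P: "extremal_pattern u F"
  shows "1 \<le> r \<Longrightarrow> r \<le> m - 1 \<Longrightarrow> fwd_edge F (rot r u) \<longleftrightarrow> odd r"
proof (induction r)
  case 0 then show ?case by simp
next
  case (Suc r)
  note P' = extremal_patternD[OF P]
  show ?case
  proof (cases "r = 0")
    case True
    have "bwd (opp u) = rot (1 + N) u" using rot_rot[of "m + 1" m u] N_eq by (simp add: mult_2)
    then have "rot 1 u = bwd (opp u)" using rot_add_N[of 1 u] by simp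
    moreover have "fwd (bwd (opp u)) = opp u" using fwd_bwd rot_in by blast
    ultimately show ?thesis using True P'(10) unfolding fwd_edge_def by (simp add: insert_commute)
  next
    case False
    then have IH: "fwd_edge F (rot r u) \<longleftrightarrow> odd r" using Suc by simp
    have "r + m < N" using Suc N_eq by simp
    then have "fwd_edge F (rot r u) \<longleftrightarrow> \<not> fwd_edge F (rot (r + 1) u)"
      using pattern_fwd_edge_step[OF P] Suc False N_eq m_ge_3 by simp
    then show ?thesis using IH by simp
  qed
qed

lemma pattern_fwd_edge_second_half:
  assumes P: "extremal_pattern u F"
  shows "r \<le> m - 2 \<Longrightarrow> fwd_edge F (rot (m + 1 + r) u) \<longleftrightarrow> even (m + 1 + r)"
proof (induction r)
  case 0
  note P' = extremal_patternD[OF P]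
  have "fwd (bwd u) = u" using fwd_bwd P'(1) by blast
  then have "fwd_edge F (bwd u)" using P'(8) unfolding fwd_edge_def by (simp add: insert_commute)
  then show ?case using odd_m by simp
next
  case (Suc r)
  have "r + 1 < N" using Suc N_eq by simp
  then have "(m + 1 + r + m) mod N = r + 1" using N_eq by (simp add: mod_if)
  then have "fwd_edge F (rot (m + 1 + r) u) \<longleftrightarrow> \<not> fwd_edge F (rot (m + 1 + r + 1) u)"
    using pattern_fwd_edge_step[OF P, of "m + 1 + r"] Suc N_eq m_ge_3 by simp
  then show ?case using Suc by auto
qed

lemma pattern_fwd_edge_iff:
  assumes P: "extremal_pattern u F" and r: "r < N"
  shows "fwd_edge F (rot r u) \<longleftrightarrow> fwd_pattern r"
proof -
  note P' = extremal_patternD[OF P]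
  consider "r = 0" | "r = m" | "1 \<le> r \<and> r \<le> m - 1" | "m + 1 \<le> r" using m_ge_3 by linarith
  then show ?thesis
  proof cases
    case 1 then show ?thesis using P'(7) rot_0[OF P'(1)] unfolding fwd_pattern_def by simp
  next
    case 2 then show ?thesis using P'(9) unfolding fwd_pattern_def by simp
  next
    case 3 then show ?thesis using pattern_fwd_edge_first_half[OF P] unfolding fwd_pattern_def by auto
  next
    case 4
    define k where "k = r - (m + 1)"
    have "r = m + 1 + k" "k \<le> m - 2" using 4 r N_eq unfolding k_def by auto
    then show ?thesis using pattern_fwd_edge_second_half[OF P] unfolding fwd_pattern_def by auto
  qed
qed

definition extremal_factor :: "nat \<Rightarrow> nat set set" where
  "extremal_factor u =
     {{rot r u, opp (rot r u)} | r. r < N \<and> r \<noteq> 0 \<and> r \<noteq> m} \<union>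
     {{rot r u, fwd (rot r u)} | r. r < N \<and> fwd_pattern r}"

lemma extremal_factor_subset_pattern:
  assumes P: "extremal_pattern u F"
  shows "extremal_factor u \<subseteq> F"
proof
  note P' = extremal_patternD[OF P]
  fix f assume "f \<in> extremal_factor u"
  then consider r where "f = {rot r u, opp (rot r u)}" "r < N" "r \<noteq> 0" "r \<noteq> m"
    | r where "f = {rot r u, fwd (rot r u)}" "r < N" "fwd_pattern r"
    unfolding extremal_factor_def by blast
  then show "f \<in> F"
  proof cases
    case 1
    then show ?thesis using P'(4)[OF rot_in] rot_eq_self_iff[OF P'(1)] rot_eq_opp_iff[OF P'(1)] by simp
  next
    case 2
    then show ?thesis using pattern_fwd_edge_iff[OF P] unfolding fwd_edge_def by simp
  qed
qed

lemma pattern_subset_extremal_factor: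
  assumes P: "extremal_pattern u F"
  shows "F \<subseteq> extremal_factor u"
proof
  note P' = extremal_patternD[OF P]
  fix f assume f: "f \<in> F"
  obtain a b where ab: "f = {a,b}" "a \<in> V" "b \<in> V" "a < b" using two_factor_edgeE[OF P'(2) f] by blast
  obtain r where r: "r < N" "rot r u = a" using rot_surj[OF P'(1) ab(2)] by blast
  have "f = {a, opp a} \<or> f = {a, fwd a} \<or> f = {a, bwd a}"
    using edge_at_cases f P'(3) ab unfolding short_edges_def by blast
  then consider "f = {a, opp a}" | "f = {a, fwd a}" | "f = {a, bwd a}" by blast
  then show "f \<in> extremal_factor u"
  proof cases
    case 1
    then have "r \<noteq> 0" "r \<noteq> m" using P'(4)[OF ab(2)] f r rot_eq_self_iff[OF P'(1)] rot_eq_opp_iff[OF P'(1)]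
      by auto
    then show ?thesis unfolding extremal_factor_def using 1 r by blast
  next
    case 2
    then have "fwd_pattern r" using pattern_fwd_edge_iff[OF P r(1)] r f unfolding fwd_edge_def by simp
    then show ?thesis unfolding extremal_factor_def using 2 r by blast
  next
    case 3
    obtain s where s: "s < N" "rot s u = bwd a" using rot_surj[OF P'(1) rot_in] by blast
    have f': "f = {rot s u, fwd (rot s u)}" using 3 s fwd_bwd[OF ab(2)] by auto
    then have "fwd_pattern s" using pattern_fwd_edge_iff[OF P s(1)] f unfolding fwd_edge_def by simp
    then show ?thesis unfolding extremal_factor_def using f' s by blast
  qed
qed

lemma pattern_eq_extremal_factor: "extremal_pattern u F \<Longrightarrow> F = extremal_factor u"
  using extremal_factor_subset_pattern pattern_subset_extremal_factor by blast

section \<open>The extremal 2-factors attain the bound\<close>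

lemma pattern_card_crossing_edges:
  assumes P: "extremal_pattern u F" and e: "e \<in> F"
  shows "card (crossing_edges F e) = crossing_bound e"
proof -
  note P' = extremal_patternD[OF P]
  have "diameter e \<or> near_diameter e" using P'(3) e unfolding short_edges_def by blast
  then show ?thesis
  proof
    assume "near_diameter e"
    then show ?thesis using card_crossing_edges_near_diameter[OF P'(2,3) e] not_diameter_and_near_diameter
      unfolding crossing_bound_def by auto
  next
    assume d: "diameter e"
    then obtain i where i: "e = {i, i + m}" "1 \<le> i" "i + m \<le> N" unfolding diameter_def by blast
    have iV: "i \<in> V" "i \<le> m" "i + m \<in> V" using i N_eq by auto
    have opp_i: "opp i = i + m" using opp_eq[OF iV(1)] iV by simp
    have "i \<noteq> u" "i \<noteq> opp u" using P'(4)[OF iV(1)] e i(1) opp_i by auto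
    moreover have "i + m \<noteq> u" "i + m \<noteq> opp u"
      using P'(4)[OF iV(3)] e i(1) opp_opp[OF iV(1)] opp_i by (auto simp: insert_commute)
    ultimately have "card (crossing_edges F e) = N - 3"
      using card_crossing_edges_diameter_balanced[OF P'(2,3) iV(1,2)] e i(1) opp_i P'(5)[OF iV(1)]
        P'(5)[OF iV(3)] P'(6)[OF iV(1)] by simp
    then show ?thesis using d unfolding crossing_bound_def by simp
  qed
qed

lemma pattern_card_diameter_edges:
  assumes P: "extremal_pattern u F"
  shows "card (diameter_edges F) = m - 1"
proof -
  note P' = extremal_patternD[OF P]
  obtain i where i: "i \<in> V" "i \<le> m" "u = i \<and> opp u = i + m \<or> u = i + m \<and> opp u = i"
    using opp_edge_cases[OF P'(1)] by blast
  have "{a\<in>{1..m}. {a, a + m} \<in> F} = {1..m} - {i}"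
  proof -
    have "{a, a + m} \<in> F \<longleftrightarrow> a \<noteq> i" if a: "a \<in> {1..m}" for a
    proof -
      have "{a, a + m} = {a, opp a}" "a \<in> V" using a opp_eq[of a] N_eq by auto
      then have "{a, a + m} \<in> F \<longleftrightarrow> a \<noteq> u \<and> a \<noteq> opp u" using P'(4) by simp
      also have "\<dots> \<longleftrightarrow> a \<noteq> i" using i a by auto
      finally show ?thesis .
    qed
    then show ?thesis by auto
  qed
  then show ?thesis unfolding card_diameter_edges using i by simp
qed

lemma pattern_twice_crossings:
  assumes P: "extremal_pattern u F"
  shows "2 * crossings F = N * (N - 4) + m - 1"
proof -
  note P' = extremal_patternD[OF P]
  have "2 * crossings F = (\<Sum>e\<in>F. crossing_bound e)"
    using twice_crossings_eq_sum_crossing_edges[OF P'(2)] pattern_card_crossing_edges[OF P] by simp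
  then show ?thesis
    using sum_crossing_bound[OF P'(2)] P'(3) pattern_card_diameter_edges[OF P] m_ge_3 by simp
qed

lemma fwd_pattern_bwd:
  assumes r: "r < N" "r \<noteq> 0" "r \<noteq> m"
  shows "fwd_pattern ((r + m + 1) mod N) \<longleftrightarrow> \<not> fwd_pattern r"
proof -
  obtain q where q: "m = 2 * q + 1" using odd_m oddE by blast
  consider "r < m - 1" | "r = m - 1" | "m < r" "r < N - 1" | "r = N - 1" using r m_ge_3 N_eq by linarith
  then show ?thesis
  proof cases
    case 1
    then have "(r + m + 1) mod N = r + m + 1" using N_eq by simp
    then show ?thesis using 1 r q unfolding fwd_pattern_def by (auto; presburger)
  next
    case 2
    then have "(r + m + 1) mod N = 0" using N_eq m_ge_3 by (simp add: mult_2)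
    then show ?thesis using 2 r q unfolding fwd_pattern_def by auto
  next
    case 3
    then have "(r + m + 1) mod N = r + 1 - m" using N_eq by (simp add: mod_if)
    then show ?thesis using 3 r q N_eq unfolding fwd_pattern_def by (auto; presburger)
  next
    case 4
    then have "(r + m + 1) mod N = m" using N_eq m_ge_3 by (simp add: mod_if)
    then show ?thesis using 4 r q N_eq unfolding fwd_pattern_def by (auto; presburger)
  qed
qed

lemma add_m_mod: "s < N \<Longrightarrow> (s + m) mod N = (if s < m then s + m else s - m)"
  using N_eq by (auto simp: mod_if)

lemma fwd_pattern_opp:
  assumes r: "r < N" "r \<noteq> 0" "r \<noteq> m"
  shows "fwd_pattern ((r + m) mod N) \<longleftrightarrow> fwd_pattern r"
proof -
  obtain q where q: "m = 2 * q + 1" using odd_m oddE by blast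
  consider "r < m" | "m < r" using r by linarith
  then show ?thesis
  proof cases
    case 1
    then have "(r + m) mod N = r + m" using N_eq by simp
    then show ?thesis using 1 r q unfolding fwd_pattern_def by (auto; presburger)
  next
    case 2
    then have "(r + m) mod N = r - m" using r add_m_mod by simp
    then show ?thesis using 2 r q N_eq unfolding fwd_pattern_def by (auto; presburger)
  qed
qed

lemma fwd_pattern_special: "fwd_pattern 0" "fwd_pattern m" "fwd_pattern (m + 1)" "fwd_pattern 1"
  using odd_m m_ge_3 unfolding fwd_pattern_def by auto

lemma fwd_pattern_degree:
  assumes r: "r < N"
  shows "of_bool (r \<noteq> 0 \<and> r \<noteq> m) + of_bool (fwd_pattern r) +
    of_bool (fwd_pattern ((r + m + 1) mod N)) = (2::nat)"
proof -
  consider "r = 0" | "r = m" | "r \<noteq> 0" "r \<noteq> m" by blast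
  then show ?thesis
  proof cases
    case 1 then show ?thesis using fwd_pattern_special N_eq m_ge_3 by simp
  next
    case 2
    have "(m + m + 1) mod N = 1" using N_eq m_ge_3 by (simp add: mult_2 mod_if)
    then show ?thesis using 2 fwd_pattern_special by simp
  next
    case 3 then show ?thesis using fwd_pattern_bwd[OF r 3] by auto
  qed
qed

lemma rot_rot_mod: "rot a (rot b u) = rot ((a + b) mod N) u"
  using rot_rot rot_mod by simp

lemma opp_rot: "opp (rot r u) = rot ((r + m) mod N) u"
  using rot_rot_mod by (simp add: add.commute)

lemma bwd_rot: "bwd (rot r u) = rot ((r + m + 1) mod N) u"
  using rot_rot_mod[of "m + 1" r u] by (simp add: ac_simps)

lemma opp_edge_mem_extremal_factor:
  assumes u: "u \<in> V" and r: "r < N"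
  shows "{rot r u, opp (rot r u)} \<in> extremal_factor u \<longleftrightarrow> r \<noteq> 0 \<and> r \<noteq> m"
proof
  assume "r \<noteq> 0 \<and> r \<noteq> m"
  then show "{rot r u, opp (rot r u)} \<in> extremal_factor u" unfolding extremal_factor_def using r by blast
next
  let ?x = "rot r u"
  assume "{?x, opp ?x} \<in> extremal_factor u"
  then consider s where "{?x, opp ?x} = {rot s u, opp (rot s u)}" "s < N" "s \<noteq> 0" "s \<noteq> m"
    | s where "{?x, opp ?x} = {rot s u, fwd (rot s u)}"
    unfolding extremal_factor_def by blast
  then show "r \<noteq> 0 \<and> r \<noteq> m"
  proof cases
    case 1
    then have "?x = rot s u \<or> ?x = rot ((s + m) mod N) u" using opp_rot by (auto simp: doubleton_eq_iff)
    then have "r = s \<or> r = (s + m) mod N" using rot_eq_rot_iff[OF u r] 1(2) N_ge_6 by auto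
    then show ?thesis using 1 add_m_mod[OF 1(2)] N_eq by (auto split: if_splits)
  next
    case 2
    then show ?thesis using diameter_opp[OF rot_in] near_diameter_fwd[OF rot_in] not_diameter_and_near_diameter
      by metis
  qed
qed

lemma fwd_edge_mem_extremal_factor:
  assumes u: "u \<in> V" and r: "r < N"
  shows "{rot r u, fwd (rot r u)} \<in> extremal_factor u \<longleftrightarrow> fwd_pattern r"
proof
  assume "fwd_pattern r"
  then show "{rot r u, fwd (rot r u)} \<in> extremal_factor u" unfolding extremal_factor_def using r by blast
next
  let ?x = "rot r u"
  assume "{?x, fwd ?x} \<in> extremal_factor u"
  then consider s where "{?x, fwd ?x} = {rot s u, opp (rot s u)}"
    | s where "{?x, fwd ?x} = {rot s u, fwd (rot s u)}" "s < N" "fwd_pattern s"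
    unfolding extremal_factor_def by blast
  then show "fwd_pattern r"
  proof cases
    case 1
    then show ?thesis using diameter_opp[OF rot_in] near_diameter_fwd[OF rot_in] not_diameter_and_near_diameter
      by metis
  next
    case 2
    then have "?x = rot s u \<or> fwd (fwd (rot s u)) = rot s u" by (auto simp: doubleton_eq_iff)
    then have "r = s" using rot_eq_rot_iff[OF u r 2(2)] fwd_fwd_neq[OF rot_in] by blast
    then show ?thesis using 2 by simp
  qed
qed

lemma extremal_factor_edge_cases:
  "f \<in> extremal_factor u \<Longrightarrow> \<exists>x\<in>V. f = {x, opp x} \<or> f = {x, fwd x}"
  unfolding extremal_factor_def using rot_in by blast

lemma short_edges_extremal_factor: "short_edges (extremal_factor u) = {}"
  unfolding short_edges_def using extremal_factor_edge_cases diameter_opp near_diameter_fwd by blast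

lemma bwd_edge_mem_extremal_factor:
  assumes u: "u \<in> V" and r: "r < N"
  shows "{rot r u, bwd (rot r u)} \<in> extremal_factor u \<longleftrightarrow> fwd_pattern ((r + m + 1) mod N)"
proof -
  have "{rot r u, bwd (rot r u)} = {bwd (rot r u), fwd (bwd (rot r u))}" using fwd_bwd[OF rot_in] by auto
  moreover have "(r + m + 1) mod N < N" using N_ge_6 by simp
  ultimately show ?thesis using fwd_edge_mem_extremal_factor[OF u] bwd_rot by simp
qed

lemma two_factor_extremal_factor:
  assumes u: "u \<in> V"
  shows "two_factor N (extremal_factor u)"
  unfolding two_factor_def
proof (intro conjI ballI)
  show "extremal_factor u \<subseteq> {{i, j} |i j. i \<in> V \<and> j \<in> V \<and> i \<noteq> j}"
  proof
    fix f assume "f \<in> extremal_factor u"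
    then obtain x where x: "x \<in> V" "f = {x, opp x} \<or> f = {x, fwd x}"
      using extremal_factor_edge_cases by blast
    then show "f \<in> {{i, j} |i j. i \<in> V \<and> j \<in> V \<and> i \<noteq> j}"
      using opp_fwd_bwd_distinct[OF x(1)] rot_in by blast
  qed
  fix w assume w: "w \<in> V"
  obtain r where r: "r < N" "rot r u = w" using rot_surj[OF u w] by blast
  have "{w, opp w} \<noteq> {w, fwd w}" "{w, opp w} \<noteq> {w, bwd w}" "{w, fwd w} \<noteq> {w, bwd w}"
    using opp_fwd_bwd_distinct[OF w] by (auto simp: doubleton_eq_iff)
  note three = card_filter_three[OF this, of "\<lambda>f. f \<in> extremal_factor u"]
  have "{w, opp w} \<in> extremal_factor u \<longleftrightarrow> r \<noteq> 0 \<and> r \<noteq> m"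
    "{w, fwd w} \<in> extremal_factor u \<longleftrightarrow> fwd_pattern r"
    "{w, bwd w} \<in> extremal_factor u \<longleftrightarrow> fwd_pattern ((r + m + 1) mod N)"
    using opp_edge_mem_extremal_factor[OF u r(1)] fwd_edge_mem_extremal_factor[OF u r(1)]
      bwd_edge_mem_extremal_factor[OF u r(1)] r(2) by simp_all
  then have "card {f\<in>{{w, opp w}, {w, fwd w}, {w, bwd w}}. f \<in> extremal_factor u} = 2"
    using three fwd_pattern_degree[OF r(1)] by simp
  then show "card {f\<in>extremal_factor u. w \<in> f} = 2"
    using edges_at_eq[OF short_edges_extremal_factor w] by simp
qed

lemma extremal_pattern_extremal_factor:
  assumes u: "u \<in> V"
  shows "extremal_pattern u (extremal_factor u)"
proof -
  let ?G = "extremal_factor u"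
  note opp_mem = opp_edge_mem_extremal_factor[OF u] and fwd_mem = fwd_edge_mem_extremal_factor[OF u]
    and bwd_mem = bwd_edge_mem_extremal_factor[OF u]
  have not_u: "r \<noteq> 0" "r \<noteq> m" if "r < N" "rot r u \<noteq> u" "rot r u \<noteq> opp u" for r
    using that rot_eq_self_iff[OF u] rot_eq_opp_iff[OF u] by auto
  have opp_in: "{w, opp w} \<in> ?G \<longleftrightarrow> w \<noteq> u \<and> w \<noteq> opp u" if w: "w \<in> V" for w
  proof -
    obtain r where r: "r < N" "rot r u = w" using rot_surj[OF u w] by blast
    then show ?thesis using opp_mem[OF r(1)] rot_eq_self_iff[OF u r(1)] rot_eq_opp_iff[OF u r(1)] by auto
  qed
  have other: "({w, bwd w} \<in> ?G \<longleftrightarrow> \<not> fwd_edge ?G w) \<and> (fwd_edge ?G w \<longleftrightarrow> fwd_edge ?G (opp w))"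
    if w: "w \<in> V" "w \<noteq> u" "w \<noteq> opp u" for w
  proof -
    obtain r where r: "r < N" "rot r u = w" using rot_surj[OF u w(1)] by blast
    have r0: "r \<noteq> 0" "r \<noteq> m" using not_u r w by auto
    have "(r + m) mod N < N" using N_ge_6 by simp
    then show ?thesis
      using bwd_mem[OF r(1)] fwd_mem[OF r(1)] fwd_mem[of "(r + m) mod N"] opp_rot[of r u]
        fwd_pattern_bwd[OF r(1) r0] fwd_pattern_opp[OF r(1) r0] r(2)
      unfolding fwd_edge_def by simp
  qed
  have N0: "0 < N" using N_ge_6 by simp
  have "(m + m + 1) mod N = 1" "(0 + m + 1) mod N = m + 1" using N_eq m_ge_3 by (simp_all add: mult_2 mod_if)
  then have ends: "fwd_edge ?G u" "{u, bwd u} \<in> ?G" "fwd_edge ?G (opp u)" "{opp u, bwd (opp u)} \<in> ?G"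
    using fwd_mem[OF N0] bwd_mem[OF N0] fwd_mem[OF m_less_N(1)] bwd_mem[OF m_less_N(1)] rot_0[OF u]
      fwd_pattern_special unfolding fwd_edge_def by simp_all
  show ?thesis unfolding extremal_pattern_def
    using u two_factor_extremal_factor[OF u] short_edges_extremal_factor opp_in other ends by blast
qed

section \<open>Rotations of \<pi>\<close>

lemma rot_comm: "rot a (rot b x) = rot b (rot a x)"
  using rot_rot by (simp add: add.commute)

lemma image_extremal_factor_rot: "(\<lambda>e. rot k ` e) ` extremal_factor u = extremal_factor (rot k u)"
proof -
  have opp: "rot k ` {rot r u, opp (rot r u)} = {rot r (rot k u), opp (rot r (rot k u))}" for r
    using rot_comm by simp
  have fwd: "rot k ` {rot r u, fwd (rot r u)} = {rot r (rot k u), fwd (rot r (rot k u))}" for r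
    using rot_comm by simp
  show ?thesis unfolding extremal_factor_def by (simp only: image_Collect[symmetric] image_Un image_image opp fwd)
qed

lemma Collect_V_eq_image_rot_1: "{w. w \<in> V \<and> P (w - 1)} = (\<lambda>r. rot r 1) ` {r. r < N \<and> P r}"
proof -
  have "w \<in> (\<lambda>r. r + 1) ` {r. r < N \<and> P r}" if "w \<in> V" "P (w - 1)" for w
    using that by (intro image_eqI[of _ _ "w - 1"]) auto
  then have "{w. w \<in> V \<and> P (w - 1)} = (\<lambda>r. r + 1) ` {r. r < N \<and> P r}" by auto
  also have "\<dots> = (\<lambda>r. rot r 1) ` {r. r < N \<and> P r}" using rot_1 by (intro image_cong) auto
  finally show ?thesis .
qed

lemma extremal_factor_1:
  "extremal_factor 1 =
     {{w, opp w} | w. w \<in> V \<and> w \<noteq> 1 \<and> w \<noteq> m + 1} \<union> {{w, fwd w} | w. w \<in> V \<and> fwd_pattern (w - 1)}"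
proof -
  have "{w. w \<in> V \<and> w \<noteq> 1 \<and> w \<noteq> m + 1} = {w. w \<in> V \<and> w - 1 \<noteq> 0 \<and> w - 1 \<noteq> m}" by auto
  then show ?thesis unfolding extremal_factor_def
    by (simp only: image_Collect[symmetric] Collect_V_eq_image_rot_1[of "\<lambda>r. r \<noteq> 0 \<and> r \<noteq> m"]
        Collect_V_eq_image_rot_1[of fwd_pattern] image_image)
qed

lemma pi_factor_eq:
  "pi_factor N = {{m + 2, 1}, {2, m + 2}, {m + 1, 2}, {N, m + 1}, {m, N}, {1, m}} \<union>
     (\<Union>a\<in>{a. odd a \<and> 3 \<le> a \<and> a + 2 \<le> m}. {{a + m + 1, a}, {a + 1, a + m + 1}, {a + m, a + 1}, {a, a + m}})"
proof -
  have "N div 2 = m" using N_eq by simp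
  then show ?thesis unfolding pi_factor_def cycle_edges_4 cycle_edges_6 by (simp add: insert_commute)
qed

lemma opp_edge_mem_extremal_factor_1: "w \<in> V \<Longrightarrow> w \<noteq> 1 \<Longrightarrow> w \<noteq> m + 1 \<Longrightarrow> {w, opp w} \<in> extremal_factor 1"
  unfolding extremal_factor_1 by blast

lemma fwd_edge_mem_extremal_factor_1: "w \<in> V \<Longrightarrow> fwd_pattern (w - 1) \<Longrightarrow> {w, fwd w} \<in> extremal_factor 1"
  unfolding extremal_factor_1 by blast

lemma pi_factor_subset_extremal_factor: "pi_factor N \<subseteq> extremal_factor 1"
proof -
  note opp = opp_edge_mem_extremal_factor_1 and fwd = fwd_edge_mem_extremal_factor_1
  have "{m + 2, 1} \<in> extremal_factor 1"
    using fwd[of "m + 2"] fwd_eq[of "m + 2"] fwd_pattern_special N_eq m_ge_3 by (simp add: insert_commute)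
  moreover have "{2, m + 2} \<in> extremal_factor 1" using opp[of 2] opp_eq[of 2] N_eq m_ge_3 by simp
  moreover have "{m + 1, 2} \<in> extremal_factor 1"
    using fwd[of 2] fwd_eq[of 2] fwd_pattern_special N_eq m_ge_3 by (simp add: insert_commute)
  moreover have "{N, m + 1} \<in> extremal_factor 1"
    using fwd[of "m + 1"] fwd_eq[of "m + 1"] fwd_pattern_special N_eq m_ge_3 by (simp add: insert_commute mult_2)
  moreover have "{m, N} \<in> extremal_factor 1" using opp[of m] opp_eq[of m] N_eq m_ge_3 by (simp add: mult_2)
  moreover have "{1, m} \<in> extremal_factor 1" using fwd[of 1] fwd_eq[of 1] fwd_pattern_special N_eq m_ge_3 by simp
  moreover have "{{a + m + 1, a}, {a + 1, a + m + 1}, {a + m, a + 1}, {a, a + m}} \<subseteq> extremal_factor 1"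
    if a: "odd a" "3 \<le> a" "a + 2 \<le> m" for a
  proof -
    have pat: "fwd_pattern a" "fwd_pattern (a + m)" using a odd_m unfolding fwd_pattern_def by auto
    have "{a + m + 1, a} \<in> extremal_factor 1"
      using fwd[of "a + m + 1"] fwd_eq[of "a + m + 1"] pat a N_eq by simp
    moreover have "{a + 1, a + m + 1} \<in> extremal_factor 1" using opp[of "a + 1"] opp_eq[of "a + 1"] a N_eq by simp
    moreover have "{a + m, a + 1} \<in> extremal_factor 1"
      using fwd[of "a + 1"] fwd_eq[of "a + 1"] pat a N_eq by (simp add: insert_commute)
    moreover have "{a, a + m} \<in> extremal_factor 1" using opp[of a] opp_eq[of a] a N_eq by simp
    ultimately show ?thesis by blast
  qed
  ultimately show ?thesis unfolding pi_factor_eq by blast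
qed

lemma six_cycle_edge_mem_pi_factor:
  "f \<in> {{m + 2, 1}, {2, m + 2}, {m + 1, 2}, {N, m + 1}, {m, N}, {1, m}} \<Longrightarrow> f \<in> pi_factor N"
  unfolding pi_factor_eq by (rule UnI1)

lemma four_cycle_edge_mem_pi_factor:
  assumes "odd a" "3 \<le> a" "a + 2 \<le> m"
    and "f \<in> {{a + m + 1, a}, {a + 1, a + m + 1}, {a + m, a + 1}, {a, a + m}}"
  shows "f \<in> pi_factor N"
  unfolding pi_factor_eq using assms by (intro UnI2 UN_I[of a]) simp_all

lemma opp_edge_mem_pi_factor:
  assumes w: "w \<in> V" "w \<noteq> 1" "w \<noteq> m + 1"
  shows "{w, opp w} \<in> pi_factor N"
proof -
  obtain x where x: "x \<in> V" "x \<le> m" "{w, opp w} = {x, x + m}" "w = x \<and> opp w = x + m \<or> w = x + m \<and> opp w = x"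
    using opp_edge_cases[OF w(1)] .
  have "2 \<le> x" using x w by auto
  then have "x = 2 \<or> x = m \<or> (3 \<le> x \<and> x \<le> m - 1 \<and> odd x) \<or> (4 \<le> x \<and> x \<le> m - 1 \<and> even x)"
    using x(2) by presburger
  then consider "x = 2" | "x = m" | "3 \<le> x" "x \<le> m - 1" "odd x" | "4 \<le> x" "x \<le> m - 1" "even x"
    by blast
  then show ?thesis
  proof cases
    case 1 then show ?thesis using x(3) by (intro six_cycle_edge_mem_pi_factor) simp
  next
    case 2 then show ?thesis using x(3) N_eq by (intro six_cycle_edge_mem_pi_factor) (simp add: mult_2)
  next
    case 3
    have "x + 2 \<le> m" using 3 odd_m by presburger
    then show ?thesis using 3 x(3) by (intro four_cycle_edge_mem_pi_factor[of x]) simp_all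
  next
    case 4
    then have "odd (x - 1)" "3 \<le> x - 1" "x - 1 + 2 \<le> m" using odd_m by presburger+
    moreover have "{w, opp w} = {x - 1 + 1, x - 1 + m + 1}" using x(3) 4 by simp
    ultimately show ?thesis by (intro four_cycle_edge_mem_pi_factor[of "x - 1"]) simp_all
  qed
qed

lemma fwd_edge_mem_pi_factor:
  assumes w: "w \<in> V" and pat: "fwd_pattern (w - 1)"
  shows "{w, fwd w} \<in> pi_factor N"
proof -
  note six = six_cycle_edge_mem_pi_factor and four = four_cycle_edge_mem_pi_factor
  have w_bounds: "1 \<le> w" "w \<le> N" using w by auto
  have "w = 1 \<or> w = m + 1 \<or> (2 \<le> w \<and> w \<le> m \<and> even w) \<or> (m + 2 \<le> w \<and> odd w)"
    using pat w_bounds unfolding fwd_pattern_def by presburger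
  then show ?thesis
  proof (elim disjE conjE)
    assume "w = 1" then show ?thesis using fwd_eq[OF w] m_ge_3 by (intro six) simp
  next
    assume "w = m + 1" then show ?thesis using fwd_eq[OF w] N_eq by (intro six) (simp add: insert_commute mult_2)
  next
    assume low: "2 \<le> w" "w \<le> m" "even w"
    then have fw: "{w, fwd w} = {w - 1 + m, w - 1 + 1}" using fwd_eq[OF w] by (auto simp: insert_commute)
    have "w = 2 \<or> (odd (w - 1) \<and> 3 \<le> w - 1 \<and> w - 1 + 2 \<le> m)" using low odd_m by presburger
    then show ?thesis
    proof
      assume "w = 2" then show ?thesis using fwd_eq[OF w] m_ge_3 by (intro six) (simp add: insert_commute)
    qed (use fw w_bounds in \<open>intro four[of "w - 1"], simp_all\<close>)
  next
    assume high: "m + 2 \<le> w" "odd w"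
    then have fw: "{w, fwd w} = {w - m - 1 + m + 1, w - m - 1}" using fwd_eq[OF w] by auto
    have "w = m + 2 \<or> (odd (w - m - 1) \<and> 3 \<le> w - m - 1 \<and> w - m - 1 + 2 \<le> m)"
      using high w_bounds N_eq odd_m by presburger
    then show ?thesis
    proof
      assume "w = m + 2" then show ?thesis using fwd_eq[OF w] by (intro six) simp
    qed (use fw w_bounds in \<open>intro four[of "w - m - 1"], simp_all\<close>)
  qed
qed

lemma pi_factor_eq_extremal_factor: "pi_factor N = extremal_factor 1"
proof
  show "extremal_factor 1 \<subseteq> pi_factor N"
    unfolding extremal_factor_1 using opp_edge_mem_pi_factor fwd_edge_mem_pi_factor by blast
qed (rule pi_factor_subset_extremal_factor)

lemma h_star_eq_extremal_factor: "h_star N k = extremal_factor (rot k 1)"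
  unfolding h_star_def pi_factor_eq_extremal_factor using image_extremal_factor_rot by simp

lemma optimal_two_factors_eq:
  "{F. two_factor N F \<and> (\<forall>G. two_factor N G \<longrightarrow> crossings G \<le> crossings F)} = {h_star N k | k. k < N}"
proof (intro set_eqI iffI)
  fix F assume "F \<in> {F. two_factor N F \<and> (\<forall>G. two_factor N G \<longrightarrow> crossings G \<le> crossings F)}"
  then have tf: "two_factor N F" and max: "\<And>G. two_factor N G \<Longrightarrow> crossings G \<le> crossings F" by auto
  have "extremal_pattern 1 (h_star N 0)"
    using h_star_eq_extremal_factor extremal_pattern_extremal_factor rot_0 N_ge_6 by simp
  then have "N * (N - 4) + m - 1 \<le> 2 * crossings F"
    using pattern_twice_crossings max extremal_patternD(2) by (metis mult_le_mono2)
  then obtain u where u: "u \<in> {1..m}" "extremal_pattern u F" using optimal_extremal_pattern[OF tf] by blast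
  then have "F = h_star N (u - 1)" "u - 1 < N"
    using pattern_eq_extremal_factor h_star_eq_extremal_factor rot_1[of "u - 1"] N_eq by auto
  then show "F \<in> {h_star N k | k. k < N}" by blast
next
  fix F assume "F \<in> {h_star N k | k. k < N}"
  then obtain k where "F = h_star N k" by blast
  then have P: "extremal_pattern (rot k 1) F"
    using h_star_eq_extremal_factor extremal_pattern_extremal_factor rot_in by simp
  then show "F \<in> {F. two_factor N F \<and> (\<forall>G. two_factor N G \<longrightarrow> crossings G \<le> crossings F)}"
    using extremal_patternD(2)[OF P] twice_crossings_le_max pattern_twice_crossings[OF P] by fastforce
qed

end

theorem propositionB2:
  fixes N :: nat
  assumes "N \<ge> 6" and "even N" and "\<not> 4 dvd N"
  shows "{F. two_factor N F \<and> (\<forall>G. two_factor N G \<longrightarrow> crossings G \<le> crossings F)}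
         = {h_star N k | k. k < N}"
proof -
  have "N = 2 * (N div 2)" "odd (N div 2)" "3 \<le> N div 2"
    using assms by (auto elim!: evenE)
  then interpret twice_odd N "N div 2" by unfold_locales
  show ?thesis by (rule optimal_two_factors_eq)
qed

end
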